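(* Let $S\subseteq\Sigma^n$ be a double-MDS-code that is not prime, and suppose $G(S)$ has $K$ connected components. Then $K$ is a power of $2$, and there exist $k=1+\log_2K\ge 2$, a partition $\{K_1,\ldots,K_k\}$ of $[n]$ into nonempty sets with $n_j=|K_j|<n$, and prime double-MDS-codes $S_j\subseteq\Sigma^{n_j}$ such that $\chi_S(\bar x)=\bigoplus_{j=1}^k\chi_{S_j}(\bar x_{K_j})$ for all $\bar x\in\Sigma^n$.
   Context: Let $\Sigma=\{0,1,2,3\}$ and $[n]=\{1,\ldots,n\}$. An $i$-line of $\Sigma^n$ is a set of the four words that agree in all coordinates except the $i$th; a line is an $i$-line for some $i\in[n]$. A set $S\subseteq\Sigma^n$ is a double-code if every line contains either $0$ or $2$ elements of $S$, and a double-MDS-code if every line contains exactly $2$ elements of $S$. A double-code is complementable if it is contained in some double-MDS-code, and prime if it is complementable, nonempty, and cannot be partitioned into two or more nonempty double-codes. The adjacency graph $G(S)$ of $S\subseteq\Sigma^n$ has vertex set $S$, two vertices being adjacent iff they differ in exactly one coordinate. $\chi_S$ is the characteristic function of $S$, $\oplus$ is addition modulo $2$, and for $K=\{i_1<\cdots<i_m\}\subseteq[n]$, $\bar x_K=(x_{i_1},\ldots,x_{i_m})$. *)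

theory Defs
  imports Main "HOL-Library.Disjoint_Sets"
begin

text \<open>Words of \<Sigma>^n with \<Sigma> = {0,1,2,3} are lists of naturals of length n with entries < 4.
  Coordinates are indexed 0..n-1 (instead of 1..n).\<close>

definition words :: "nat \<Rightarrow> nat list set" where
  "words n = {x. length x = n \<and> set x \<subseteq> {0..<4}}"

definition line_through :: "nat list \<Rightarrow> nat \<Rightarrow> nat list set" where
  "line_through x i = {x[i := a] | a. a < 4}"

definition is_line :: "nat \<Rightarrow> nat list set \<Rightarrow> bool" where
  "is_line n L \<longleftrightarrow> (\<exists>x \<in> words n. \<exists>i < n. L = line_through x i)"

definition double_code :: "nat \<Rightarrow> nat list set \<Rightarrow> bool" where
  "double_code n S \<longleftrightarrow> S \<subseteq> words n \<and>
     (\<forall>L. is_line n L \<longrightarrow> card (L \<inter> S) = 0 \<or> card (L \<inter> S) = 2)"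

definition double_MDS_code :: "nat \<Rightarrow> nat list set \<Rightarrow> bool" where
  "double_MDS_code n S \<longleftrightarrow> S \<subseteq> words n \<and>
     (\<forall>L. is_line n L \<longrightarrow> card (L \<inter> S) = 2)"

definition complementable :: "nat \<Rightarrow> nat list set \<Rightarrow> bool" where
  "complementable n S \<longleftrightarrow> double_code n S \<and> (\<exists>M. double_MDS_code n M \<and> S \<subseteq> M)"

definition prime_code :: "nat \<Rightarrow> nat list set \<Rightarrow> bool" where
  "prime_code n S \<longleftrightarrow> complementable n S \<and> S \<noteq> {} \<and>
     \<not> (\<exists>P. partition_on S P \<and> card P \<ge> 2 \<and> (\<forall>T \<in> P. double_code n T))"

definition adjacent :: "nat list \<Rightarrow> nat list \<Rightarrow> bool" where
  "adjacent x y \<longleftrightarrow> length x = length y \<and> card {i. i < length x \<and> x ! i \<noteq> y ! i} = 1"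

definition adj_in :: "nat list set \<Rightarrow> nat list \<Rightarrow> nat list \<Rightarrow> bool" where
  "adj_in S x y \<longleftrightarrow> x \<in> S \<and> y \<in> S \<and> adjacent x y"

definition components :: "nat list set \<Rightarrow> nat list set set" where
  "components S = {{y \<in> S. (adj_in S)\<^sup>*\<^sup>* x y} | x. x \<in> S}"

end

theory Submission
  imports Defs
begin

text \<open>
  For coordinates \<open>i \<noteq> j\<close> and a word \<open>x\<close>, the \<open>(i, j)\<close>-plane of \<open>S\<close> through \<open>x\<close> is the
  pattern \<open>{(a, b). x[i := a, j := b] \<in> S}\<close> in the 4 \<times> 4 grid; it has two entries in every row and
  column. It is split if its indicator has the form \<open>f a \<oplus> g b\<close>, and \<open>i\<close>, \<open>j\<close> are linked if some
  \<open>(i, j)\<close>-plane is not split. Let \<open>K\<^sub>1, \<dots>, K\<^sub>k\<close> be the classes of the transitive closure of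
  linkedness. All planes across different classes are split, and this forces \<open>\<chi>\<^bsub>S\<^esub>(x)\<close> to be the
  sum mod 2 of the bits \<open>\<chi>\<^bsub>S\<^sub>j\<^esub>(x\<^bsub>K\<^sub>j\<^esub>)\<close>, where \<open>S\<^sub>j\<close> is the restriction of \<open>S\<close> to \<open>K\<^sub>j\<close> with
  the remaining coordinates fixed to a word outside \<open>S\<close>.

  Within a class the key fact is that a union \<open>T\<close> of components of \<open>G(S)\<close> never cuts a plane
  of linked coordinates: a cut plane has a rigid 2 \<times> 2 block shape, which propagates to the parallel
  planes and would force all of them to be split. Hence a code all of whose coordinates are
  linked has a connected adjacency graph and is prime. This applies to every \<open>S\<^sub>j\<close>, and to \<open>S\<close>
  itself if \<open>k = 1\<close>. Finally, two words of \<open>S\<close> are connected iff they have the same bits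
  \<open>\<chi>\<^bsub>S\<^sub>j\<^esub>(x\<^bsub>K\<^sub>j\<^esub>)\<close>; the bit vectors that occur are exactly those of odd weight, so \<open>G(S)\<close> has
  \<open>2 ^ (k - 1)\<close> components.
\<close>

section \<open>Words and lines\<close>

lemma words_iff: "x \<in> words n \<longleftrightarrow> length x = n \<and> (\<forall>i<n. x ! i < 4)"
  unfolding words_def by (auto simp: in_set_conv_nth subset_iff)

lemma length_words: "x \<in> words n \<Longrightarrow> length x = n"
  by (simp add: words_def)

lemma nth_words_less: "x \<in> words n \<Longrightarrow> i < n \<Longrightarrow> x ! i < 4"
  by (simp add: words_iff)

lemma list_update_words: "x \<in> words n \<Longrightarrow> a < 4 \<Longrightarrow> x[i := a] \<in> words n"
  unfolding words_def using set_update_subset_insert[of x i a] by auto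

definition line_count :: "nat list set \<Rightarrow> nat list \<Rightarrow> nat \<Rightarrow> nat" where
  "line_count S x i = card {a. a < 4 \<and> x[i := a] \<in> S}"

lemma card_line_through_Int:
  assumes "x \<in> words n" "i < n"
  shows "card (line_through x i \<inter> S) = line_count S x i"
proof -
  have "line_through x i \<inter> S = (\<lambda>a. x[i := a]) ` {a. a < 4 \<and> x[i := a] \<in> S}"
    by (auto simp: line_through_def)
  moreover have "inj_on (\<lambda>a. x[i := a]) {a. a < 4 \<and> x[i := a] \<in> S}"
    using assms by (intro inj_onI) (metis length_words nth_list_update_eq)
  ultimately show ?thesis by (simp add: line_count_def card_image)
qed

lemma double_MDS_code_iff:
  "double_MDS_code n S \<longleftrightarrow> S \<subseteq> words n \<and> (\<forall>x\<in>words n. \<forall>i<n. line_count S x i = 2)"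
  unfolding double_MDS_code_def is_line_def using card_line_through_Int by fastforce

lemma double_code_iff:
  "double_code n S \<longleftrightarrow>
     S \<subseteq> words n \<and> (\<forall>x\<in>words n. \<forall>i<n. line_count S x i = 0 \<or> line_count S x i = 2)"
  unfolding double_code_def is_line_def using card_line_through_Int by fastforce

lemma MDS_subset_words: "double_MDS_code n S \<Longrightarrow> S \<subseteq> words n"
  by (simp add: double_MDS_code_iff)

lemma line_count_MDS: "double_MDS_code n S \<Longrightarrow> x \<in> words n \<Longrightarrow> i < n \<Longrightarrow> line_count S x i = 2"
  by (simp add: double_MDS_code_iff)

lemma MDS_line_in_out:
  assumes "double_MDS_code n S" "x \<in> words n" "i < n"
  shows "\<exists>a<4. x[i := a] \<in> S" "\<exists>a<4. x[i := a] \<notin> S"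
proof -
  have c: "card {a. a < 4 \<and> x[i := a] \<in> S} = 2"
    using line_count_MDS[OF assms] by (simp add: line_count_def)
  show "\<exists>a<4. x[i := a] \<in> S"
  proof (rule ccontr)
    assume "\<not> ?thesis"
    then have "{a. a < 4 \<and> x[i := a] \<in> S} = {}" by auto
    with c show False by simp
  qed
  show "\<exists>a<4. x[i := a] \<notin> S"
  proof (rule ccontr)
    assume "\<not> ?thesis"
    then have "{a. a < 4 \<and> x[i := a] \<in> S} = {..<4}" by auto
    with c show False by simp
  qed
qed

lemma exists_word_notin_MDS:
  assumes "double_MDS_code n S" "0 < n"
  obtains y where "y \<in> words n" "y \<notin> S"
proof -
  have r: "replicate n 0 \<in> words n" by (simp add: words_iff)
  then show thesis using MDS_line_in_out(2)[OF assms(1) r assms(2)] list_update_words[OF r] that by blast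
qed

lemma MDS_nonempty: "double_MDS_code n S \<Longrightarrow> 0 < n \<Longrightarrow> S \<noteq> {}"
  using MDS_line_in_out(1)[of n S "replicate n 0" 0] by (auto simp: words_iff)

lemma list_update_induct_towards:
  assumes "length x = length y" and "P x"
    and step: "\<And>z k. P z \<Longrightarrow> length z = length y \<Longrightarrow> k < length y \<Longrightarrow> x ! k \<noteq> y ! k \<Longrightarrow>
                 P (z[k := y ! k])"
  shows "P y"
proof -
  have "P y" if "P z" "length z = length y" "\<forall>k<length y. z ! k \<noteq> y ! k \<longrightarrow> x ! k \<noteq> y ! k"
    and "card {k. k < length y \<and> z ! k \<noteq> y ! k} = d" for z d
    using that
  proof (induction d arbitrary: z)
    case 0
    then have "z = y" by (auto intro: nth_equalityI)
    with 0 show ?case by simp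
  next
    case (Suc d)
    then obtain k where k: "k < length y" "z ! k \<noteq> y ! k"
      by (metis (mono_tags, lifting) Collect_empty_eq card.empty nat.distinct(1))
    have "{q. q < length y \<and> z[k := y ! k] ! q \<noteq> y ! q} = {q. q < length y \<and> z ! q \<noteq> y ! q} - {k}"
      using Suc.prems(2) k by (auto simp: nth_list_update)
    then have "card {q. q < length y \<and> z[k := y ! k] ! q \<noteq> y ! q} = d"
      using Suc.prems(4) k by simp
    moreover have "P (z[k := y ! k])" using Suc.prems k by (intro step) auto
    moreover have "x ! q \<noteq> y ! q" if "q < length y" "z[k := y ! k] ! q \<noteq> y ! q" for q
      using Suc.prems(2,3) that by (cases "q = k") auto
    ultimately show ?case using Suc.prems(2) by (intro Suc.IH) auto
  qed
  then show ?thesis using assms by blast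
qed

lemma words_update_invariant:
  assumes x: "x \<in> words n" and y: "y \<in> words n"
    and inv: "\<And>z k. z \<in> words n \<Longrightarrow> k < n \<Longrightarrow> x ! k \<noteq> y ! k \<Longrightarrow> f (z[k := y ! k]) = f z"
  shows "f y = f x"
proof -
  have "y \<in> words n \<and> f y = f x"
  proof (rule list_update_induct_towards[of x y])
    fix z k assume "z \<in> words n \<and> f z = f x" "k < length y" "x ! k \<noteq> y ! k"
    then show "z[k := y ! k] \<in> words n \<and> f (z[k := y ! k]) = f x"
      using y inv by (simp add: length_words list_update_words nth_words_less)
  qed (use x y in \<open>auto simp: length_words\<close>)
  then show ?thesis by simp
qed

section \<open>Subwords\<close>

definition rank :: "nat set \<Rightarrow> nat \<Rightarrow> nat" where
  "rank K p = card {q\<in>K. q < p}"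

definition unrank :: "nat set \<Rightarrow> nat \<Rightarrow> nat" where
  "unrank K r = inv_into K (rank K) r"

lemma nth_nths_rank: "p \<in> K \<Longrightarrow> p < length xs \<Longrightarrow> nths xs K ! rank K p = xs ! p"
proof (induction xs arbitrary: K p)
  case Nil then show ?case by simp
next
  case (Cons y ys)
  show ?case
  proof (cases p)
    case 0
    then show ?thesis using Cons.prems by (simp add: rank_def nths_Cons)
  next
    case (Suc p')
    let ?K' = "{j. Suc j \<in> K}"
    have eq: "{q\<in>K. q < Suc p'} = ({0} \<inter> K) \<union> Suc ` {q\<in>?K'. q < p'}"
      by (auto simp: image_iff less_Suc_eq_0_disj)
    have "rank K p = card ({0} \<inter> K) + card (Suc ` {q\<in>?K'. q < p'})"
      unfolding rank_def Suc eq by (rule card_Un_disjoint) auto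
    also have "\<dots> = of_bool (0 \<in> K) + rank ?K' p'"
      by (simp add: card_image rank_def)
    finally show ?thesis using Cons.IH[of p' ?K'] Cons.prems Suc
      by (cases "0 \<in> K") (simp_all add: nths_Cons)
  qed
qed

lemma length_nths_subset: "K \<subseteq> {..<length xs} \<Longrightarrow> length (nths xs K) = card K"
proof -
  assume "K \<subseteq> {..<length xs}"
  then have "{i. i < length xs \<and> i \<in> K} = K" by auto
  then show ?thesis by (simp add: length_nths)
qed

lemma bij_betw_rank: "finite K \<Longrightarrow> bij_betw (rank K) K {..<card K}"
proof -
  assume fin: "finite K"
  have mono: "rank K p < rank K p'" if "p \<in> K" "p' \<in> K" "p < p'" for p p'
    unfolding rank_def using fin that by (intro psubset_card_mono) auto
  have inj: "inj_on (rank K) K"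
    by (intro inj_onI) (metis mono less_irrefl linorder_neqE_nat)
  have "rank K ` K \<subseteq> {..<card K}"
    unfolding rank_def using fin by (auto intro!: psubset_card_mono)
  moreover have "card (rank K ` K) = card {..<card K}" using card_image[OF inj] by simp
  ultimately have "rank K ` K = {..<card K}" by (simp add: card_subset_eq)
  then show ?thesis using inj by (simp add: bij_betw_def)
qed

lemma
  assumes "finite K" "r < card K"
  shows unrank_mem: "unrank K r \<in> K" and rank_unrank: "rank K (unrank K r) = r"
  using bij_betw_rank[OF assms(1)] assms(2) unfolding unrank_def
  by (auto simp: bij_betw_def intro: inv_into_into f_inv_into_f)

lemma unrank_rank: "finite K \<Longrightarrow> p \<in> K \<Longrightarrow> unrank K (rank K p) = p"
  using bij_betw_rank unfolding unrank_def by (simp add: bij_betw_def)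

lemma rank_less_card: "finite K \<Longrightarrow> p \<in> K \<Longrightarrow> rank K p < card K"
  using bij_betw_rank by (auto simp: bij_betw_def)

lemma rank_inj: "finite K \<Longrightarrow> p \<in> K \<Longrightarrow> q \<in> K \<Longrightarrow> rank K p = rank K q \<Longrightarrow> p = q"
  using bij_betw_rank by (auto simp: bij_betw_def inj_on_def)

lemma nth_nths_unrank:
  assumes "K \<subseteq> {..<length xs}" "r < card K"
  shows "nths xs K ! r = xs ! unrank K r"
proof -
  have "finite K" using assms(1) finite_subset by blast
  then have u: "unrank K r \<in> K" "rank K (unrank K r) = r"
    using unrank_mem rank_unrank assms(2) by auto
  then have "unrank K r < length xs" using assms(1) by auto
  then show ?thesis using nth_nths_rank[OF u(1)] u(2) by simp
qed

lemma nths_eq_iff: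
  assumes "length xs = length ys" "K \<subseteq> {..<length xs}"
  shows "nths xs K = nths ys K \<longleftrightarrow> (\<forall>p\<in>K. xs ! p = ys ! p)"
proof
  assume "nths xs K = nths ys K"
  then show "\<forall>p\<in>K. xs ! p = ys ! p"
    using assms nth_nths_rank[of _ K xs] nth_nths_rank[of _ K ys] by (metis lessThan_iff subsetD)
next
  assume "\<forall>p\<in>K. xs ! p = ys ! p"
  then show "nths xs K = nths ys K"
    using assms length_nths_subset[of K xs] length_nths_subset[of K ys]
    by (intro nth_equalityI) (auto simp: nth_nths_unrank unrank_mem finite_subset)
qed

lemma nths_list_update_notin:
  assumes "p \<notin> K" "K \<subseteq> {..<length xs}"
  shows "nths (xs[p := a]) K = nths xs K"
proof -
  have "\<forall>q\<in>K. xs[p := a] ! q = xs ! q" using assms(1) by (metis nth_list_update_neq)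
  then show ?thesis using nths_eq_iff[of "xs[p := a]" xs K] assms(2) by simp
qed

lemma nths_words: "x \<in> words n \<Longrightarrow> K \<subseteq> {..<n} \<Longrightarrow> nths x K \<in> words (card K)"
  unfolding words_def using length_nths_subset[of K x] set_nths_subset[of x K] by auto

definition embed_at :: "nat list \<Rightarrow> nat set \<Rightarrow> nat list \<Rightarrow> nat list" where
  "embed_at u K z = map (\<lambda>p. if p \<in> K then z ! rank K p else u ! p) [0..<length u]"

definition patch :: "nat list \<Rightarrow> nat set \<Rightarrow> nat list \<Rightarrow> nat list" where
  "patch u K x = map (\<lambda>p. if p \<in> K then x ! p else u ! p) [0..<length u]"

lemma length_embed_at [simp]: "length (embed_at u K z) = length u"
  by (simp add: embed_at_def)

lemma nth_embed_at: "p < length u \<Longrightarrow> embed_at u K z ! p = (if p \<in> K then z ! rank K p else u ! p)"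
  by (simp add: embed_at_def)

lemma length_patch [simp]: "length (patch u K x) = length u"
  by (simp add: patch_def)

lemma nth_patch: "p < length u \<Longrightarrow> patch u K x ! p = (if p \<in> K then x ! p else u ! p)"
  by (simp add: patch_def)

lemma embed_at_words:
  assumes u: "u \<in> words n" and z: "z \<in> words (card K)" and K: "K \<subseteq> {..<n}"
  shows "embed_at u K z \<in> words n"
proof -
  have fin: "finite K" using K finite_subset by blast
  have "embed_at u K z ! p < 4" if p: "p < n" for p
  proof (cases "p \<in> K")
    case True
    then have "z ! rank K p < 4" using nth_words_less[OF z rank_less_card[OF fin]] by blast
    then show ?thesis using u p True by (simp add: nth_embed_at length_words)
  next
    case False
    then show ?thesis using u p by (simp add: nth_embed_at length_words nth_words_less)
  qed
  moreover have "length (embed_at u K z) = n" using u by (simp add: length_words)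
  ultimately show ?thesis by (simp add: words_iff)
qed

lemma nths_embed_at:
  assumes K: "K \<subseteq> {..<length u}" and z: "length z = card K"
  shows "nths (embed_at u K z) K = z"
proof (rule nth_equalityI)
  have fin: "finite K" using K finite_subset by blast
  show "length (nths (embed_at u K z) K) = length z"
    using K z length_nths_subset[of K "embed_at u K z"] by simp
  fix r assume "r < length (nths (embed_at u K z) K)"
  then have r: "r < card K" using K length_nths_subset[of K "embed_at u K z"] by simp
  have "unrank K r < length u" using K unrank_mem[OF fin r] by auto
  then show "nths (embed_at u K z) K ! r = z ! r"
    using K r unrank_mem[OF fin r] rank_unrank[OF fin r] by (simp add: nth_nths_unrank nth_embed_at)
qed

lemma embed_at_nths:
  assumes "length x = length u" "K \<subseteq> {..<length u}"
    and "\<And>p. p < length u \<Longrightarrow> p \<notin> K \<Longrightarrow> x ! p = u ! p"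
  shows "embed_at u K (nths x K) = x"
proof (rule nth_equalityI)
  fix p assume "p < length (embed_at u K (nths x K))"
  then show "embed_at u K (nths x K) ! p = x ! p"
    using assms nth_nths_rank[of p K x] by (simp add: nth_embed_at)
qed (simp add: assms(1))

lemma embed_at_list_update:
  assumes K: "K \<subseteq> {..<length u}" and r: "r < card K" and z: "length z = card K"
  shows "embed_at u K (z[r := a]) = (embed_at u K z)[unrank K r := a]"
proof (rule nth_equalityI)
  fix p assume "p < length (embed_at u K (z[r := a]))"
  then have p: "p < length u" by simp
  have fin: "finite K" using K finite_subset by blast
  show "embed_at u K (z[r := a]) ! p = (embed_at u K z)[unrank K r := a] ! p"
  proof (cases "p \<in> K")
    case True
    have iff: "rank K p = r \<longleftrightarrow> p = unrank K r"
      using rank_inj[OF fin True unrank_mem[OF fin r]] rank_unrank[OF fin r] by auto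
    have "rank K p < length z" using rank_less_card[OF fin True] z by simp
    then show ?thesis using p True r z iff by (cases "p = unrank K r") (auto simp: nth_embed_at)
  next
    case False
    then have "p \<noteq> unrank K r" using unrank_mem[OF fin r] by auto
    then show ?thesis using p False by (simp add: nth_embed_at)
  qed
qed simp

lemma patch_words: "u \<in> words n \<Longrightarrow> x \<in> words n \<Longrightarrow> patch u K x \<in> words n"
  by (auto simp: words_iff nth_patch)

lemma patch_id:
  "length x = length u \<Longrightarrow> (\<And>p. p < length u \<Longrightarrow> p \<in> K \<Longrightarrow> x ! p = u ! p) \<Longrightarrow> patch u K x = u"
  by (rule nth_equalityI) (simp_all add: nth_patch)

lemma patch_all: "length x = length u \<Longrightarrow> {..<length u} \<subseteq> K \<Longrightarrow> patch u K x = x"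
  by (rule nth_equalityI) (auto simp: nth_patch)

lemma patch_eq_embed_at:
  assumes "length x = length u" "K \<subseteq> {..<length u}"
  shows "patch u K x = embed_at u K (nths x K)"
proof (rule nth_equalityI)
  fix p assume "p < length (patch u K x)"
  then show "patch u K x ! p = embed_at u K (nths x K) ! p"
    using assms nth_nths_rank[of p K x] by (simp add: nth_patch nth_embed_at)
qed simp

section \<open>Patterns in the 4 \<times> 4 grid\<close>

definition grid4 :: "(nat \<times> nat) set" where
  "grid4 = {(a, b). a < 4 \<and> b < 4}"

definition grid_row :: "(nat \<times> nat) set \<Rightarrow> nat \<Rightarrow> nat set" where
  "grid_row P a = {b. b < 4 \<and> (a, b) \<in> P}"

definition grid_col :: "(nat \<times> nat) set \<Rightarrow> nat \<Rightarrow> nat set" where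
  "grid_col P b = {a. a < 4 \<and> (a, b) \<in> P}"

definition two_regular :: "(nat \<times> nat) set \<Rightarrow> bool" where
  "two_regular P \<longleftrightarrow>
     P \<subseteq> grid4 \<and> (\<forall>a<4. card (grid_row P a) = 2) \<and> (\<forall>b<4. card (grid_col P b) = 2)"

text \<open>Equivalently, the indicator function of \<open>P\<close> on the grid has the form \<open>f a \<oplus> g b\<close>.\<close>

definition even_rectangles :: "(nat \<times> nat) set \<Rightarrow> bool" where
  "even_rectangles P \<longleftrightarrow> (\<forall>a a' b b'. a < 4 \<longrightarrow> a' < 4 \<longrightarrow> b < 4 \<longrightarrow> b' < 4 \<longrightarrow>
      (((a, b) \<in> P \<longleftrightarrow> (a', b) \<in> P) \<longleftrightarrow> ((a, b') \<in> P \<longleftrightarrow> (a', b') \<in> P)))"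

lemma even_rectanglesI:
  assumes "\<And>a a' b b'. a < 4 \<Longrightarrow> a' < 4 \<Longrightarrow> b < 4 \<Longrightarrow> b' < 4 \<Longrightarrow>
             ((a, b) \<in> P \<longleftrightarrow> (a', b) \<in> P) \<longleftrightarrow> ((a, b') \<in> P \<longleftrightarrow> (a', b') \<in> P)"
  shows "even_rectangles P"
  unfolding even_rectangles_def using assms by blast

lemma even_rectanglesD:
  assumes "even_rectangles P" "a < 4" "a' < 4" "b < 4" "b' < 4"
  shows "((a, b) \<in> P \<longleftrightarrow> (a', b) \<in> P) \<longleftrightarrow> ((a, b') \<in> P \<longleftrightarrow> (a', b') \<in> P)"
  using assms unfolding even_rectangles_def by blast
lemma even_rectangles_xor:
  assumes "\<And>a b. a < 4 \<Longrightarrow> b < 4 \<Longrightarrow> (a, b) \<in> P \<longleftrightarrow> (((a, b) \<in> Q) \<noteq> c)"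
  shows "even_rectangles P \<longleftrightarrow> even_rectangles Q"
  unfolding even_rectangles_def by (cases c) (simp_all add: assms)

lemma even_rectangles_grid_Diff: "even_rectangles (grid4 - P) \<longleftrightarrow> even_rectangles P"
  by (rule even_rectangles_xor[where c = True]) (simp add: grid4_def)

lemma even_rectangles_transpose:
  assumes "even_rectangles P" shows "even_rectangles {(b, a). (a, b) \<in> P}"
  unfolding even_rectangles_def
proof (intro allI impI)
  fix a a' b b' :: nat assume "a < 4" "a' < 4" "b < 4" "b' < 4"
  then have "((b, a) \<in> P \<longleftrightarrow> (b', a) \<in> P) \<longleftrightarrow> ((b, a') \<in> P \<longleftrightarrow> (b', a') \<in> P)"
    using assms unfolding even_rectangles_def by blast
  then show "((a, b) \<in> {(b, a). (a, b) \<in> P} \<longleftrightarrow> (a', b) \<in> {(b, a). (a, b) \<in> P}) \<longleftrightarrow>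
      ((a, b') \<in> {(b, a). (a, b) \<in> P} \<longleftrightarrow> (a', b') \<in> {(b, a). (a, b) \<in> P})"
    by (cases "(b, a) \<in> P"; cases "(b', a) \<in> P"; cases "(b, a') \<in> P"; cases "(b', a') \<in> P")
      simp_all
qed

lemma even_rectangles_product: "even_rectangles {(a, b). a < 4 \<and> b < 4 \<and> (a \<in> A \<longleftrightarrow> b \<in> C)}"
  unfolding even_rectangles_def
  apply (intro allI impI)
  subgoal for a a' b b' by (cases "a \<in> A"; cases "a' \<in> A"; cases "b \<in> C"; cases "b' \<in> C") simp_all
  done

lemma two_regular_subset_grid: "two_regular P \<Longrightarrow> (a, b) \<in> P \<Longrightarrow> a < 4 \<and> b < 4"
  by (auto simp: two_regular_def grid4_def)

lemma two_regular_row_gap: "two_regular P \<Longrightarrow> \<exists>b<4. (0, b) \<notin> P"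
proof (rule ccontr)
  assume "two_regular P" "\<not> (\<exists>b<4. (0, b) \<notin> P)"
  then have "grid_row P 0 = {..<4}" "card (grid_row P 0) = 2"
    by (auto simp: grid_row_def two_regular_def)
  then show False by simp
qed

lemma two_regular_ne_grid_Diff: "two_regular P \<Longrightarrow> P \<noteq> grid4 - P"
proof
  assume "two_regular P" "P = grid4 - P"
  then have "grid_row P 0 = {}" "card (grid_row P 0) = 2"
    by (auto simp: grid_row_def grid4_def two_regular_def)
  then show False by simp
qed

lemma two_regular_by_rows:
  assumes Q: "two_regular Q" and C: "C \<subseteq> {..<4}"
    and rows: "\<And>a. a < 4 \<Longrightarrow> grid_row Q a \<subseteq> (if a \<in> A then C else {..<4} - C)"
    and a1: "a1 < 4" "a1 \<in> A" and a0: "a0 < 4" "a0 \<notin> A"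
  shows "card C = 2" and "Q = {(a, b). a < 4 \<and> b < 4 \<and> (a \<in> A \<longleftrightarrow> b \<in> C)}"
proof -
  have fin: "finite C" using C finite_subset by blast
  have row: "card (grid_row Q a) = 2" if "a < 4" for a using Q that by (simp add: two_regular_def)
  have compl: "card ({..<4} - C) = 4 - card C" using C fin by (simp add: card_Diff_subset)
  have "grid_row Q a1 \<subseteq> C" using rows[OF a1(1)] a1(2) by simp
  then have "2 \<le> card C" using card_mono[OF fin] row[OF a1(1)] by metis
  moreover have "grid_row Q a0 \<subseteq> {..<4} - C" using rows[OF a0(1)] a0(2) by simp
  then have "2 \<le> card ({..<4} - C)" using card_mono[of "{..<4} - C" "grid_row Q a0"] row[OF a0(1)] by simp
  ultimately show c2: "card C = 2" using compl by linarith
  have eq: "grid_row Q a = (if a \<in> A then C else {..<4} - C)" if "a < 4" for a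
  proof (rule card_subset_eq)
    show "finite (if a \<in> A then C else {..<4} - C)" using fin by simp
    show "card (grid_row Q a) = card (if a \<in> A then C else {..<4} - C)"
      using row[OF that] c2 compl by simp
  qed (rule rows[OF that])
  show "Q = {(a, b). a < 4 \<and> b < 4 \<and> (a \<in> A \<longleftrightarrow> b \<in> C)}"
  proof (intro set_eqI iffI)
    fix p assume p: "p \<in> Q"
    obtain a b where ab: "p = (a, b)" by (cases p)
    with p have "a < 4" "b < 4" "b \<in> grid_row Q a"
      using two_regular_subset_grid[OF Q] by (auto simp: grid_row_def)
    then show "p \<in> {(a, b). a < 4 \<and> b < 4 \<and> (a \<in> A \<longleftrightarrow> b \<in> C)}"
      using eq ab by (cases "a \<in> A") auto
  next
    fix p assume p: "p \<in> {(a, b). a < 4 \<and> b < 4 \<and> (a \<in> A \<longleftrightarrow> b \<in> C)}"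
    obtain a b where ab: "p = (a, b)" by (cases p)
    with p have "a < 4" "b \<in> (if a \<in> A then C else {..<4} - C)" by auto
    then have "b \<in> grid_row Q a" using eq by simp
    then show "p \<in> Q" using ab by (simp add: grid_row_def)
  qed
qed

lemma closed_part_iff_projections:
  assumes RQ: "R \<subseteq> Q"
    and row_closed: "\<And>a b b'. (a, b) \<in> Q \<Longrightarrow> (a, b') \<in> Q \<Longrightarrow> (a, b) \<in> R \<longleftrightarrow> (a, b') \<in> R"
    and col_closed: "\<And>a a' b. (a, b) \<in> Q \<Longrightarrow> (a', b) \<in> Q \<Longrightarrow> (a, b) \<in> R \<longleftrightarrow> (a', b) \<in> R"
    and ab: "(a, b) \<in> Q"
  shows "(a, b) \<in> R \<longleftrightarrow> a \<in> fst ` R" and "(a, b) \<in> R \<longleftrightarrow> b \<in> snd ` R"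
proof -
  show "(a, b) \<in> R \<longleftrightarrow> a \<in> fst ` R"
  proof
    assume "a \<in> fst ` R"
    then obtain b0 where "(a, b0) \<in> R" by force
    then show "(a, b) \<in> R" using row_closed[of a b0 b] RQ ab by blast
  qed force
  show "(a, b) \<in> R \<longleftrightarrow> b \<in> snd ` R"
  proof
    assume "b \<in> snd ` R"
    then obtain a0 where "(a0, b) \<in> R" by force
    then show "(a, b) \<in> R" using col_closed[of a0 b a] RQ ab by blast
  qed force
qed

lemma two_regular_block_shape:
  assumes Q: "two_regular Q" and RQ: "R \<subseteq> Q"
    and row_closed: "\<And>a b b'. (a, b) \<in> Q \<Longrightarrow> (a, b') \<in> Q \<Longrightarrow> (a, b) \<in> R \<longleftrightarrow> (a, b') \<in> R"
    and col_closed: "\<And>a a' b. (a, b) \<in> Q \<Longrightarrow> (a', b) \<in> Q \<Longrightarrow> (a, b) \<in> R \<longleftrightarrow> (a', b) \<in> R"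
    and "R \<noteq> {}" "R \<noteq> Q"
  obtains A C where "A \<subseteq> {..<4}" "C \<subseteq> {..<4}" "card A = 2" "card C = 2"
    "Q = {(a, b). a < 4 \<and> b < 4 \<and> (a \<in> A \<longleftrightarrow> b \<in> C)}"
    "R = {(a, b). a < 4 \<and> b < 4 \<and> a \<in> A \<and> b \<in> C}"
proof -
  note Q4 = two_regular_subset_grid[OF Q]
  define A where "A = fst ` R"
  define C where "C = snd ` R"
  have inA: "(a, b) \<in> R \<longleftrightarrow> a \<in> A" and inC: "(a, b) \<in> R \<longleftrightarrow> b \<in> C" if "(a, b) \<in> Q" for a b
    unfolding A_def C_def using closed_part_iff_projections[OF RQ row_closed col_closed that] by blast+
  have memR: "a \<in> A" "b \<in> C" if "(a, b) \<in> R" for a b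
    using that unfolding A_def C_def by force+
  have A4: "A \<subseteq> {..<4}" and C4: "C \<subseteq> {..<4}"
    using RQ Q4 by (auto simp: A_def C_def)
  obtain a1 b1 where "(a1, b1) \<in> R" using \<open>R \<noteq> {}\<close> by auto
  then have a1: "a1 < 4" "a1 \<in> A" using RQ Q4 memR by auto
  obtain a0 b0 where "(a0, b0) \<in> Q" "(a0, b0) \<notin> R" using RQ \<open>R \<noteq> Q\<close> by auto
  then have a0: "a0 < 4" "a0 \<notin> A" using Q4 inA by auto
  have "grid_row Q a \<subseteq> (if a \<in> A then C else {..<4} - C)" for a
    using inA inC by (auto simp: grid_row_def)
  note shape = two_regular_by_rows[OF Q C4 this a1 a0]
  then have "C \<noteq> {}" by auto
  then obtain b where b: "b \<in> C" by blast
  then have "grid_col Q b = A" using shape(2) A4 C4 by (auto simp: grid_col_def)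
  then have "card A = 2" using Q b C4 by (auto simp: two_regular_def)
  moreover have "R = {(a, b). a < 4 \<and> b < 4 \<and> a \<in> A \<and> b \<in> C}"
  proof (intro set_eqI iffI)
    fix p assume "p \<in> R"
    then show "p \<in> {(a, b). a < 4 \<and> b < 4 \<and> a \<in> A \<and> b \<in> C}"
      using RQ Q4 memR by (cases p) auto
  next
    fix p assume "p \<in> {(a, b). a < 4 \<and> b < 4 \<and> a \<in> A \<and> b \<in> C}"
    then show "p \<in> R" using shape(2) inA by (cases p) auto
  qed
  ultimately show thesis using that A4 C4 shape by blast
qed

lemma two_regular_avoiding_block:
  assumes P: "two_regular P" and A: "A \<subseteq> {..<4}" "card A = 2" and C: "C \<subseteq> {..<4}" "card C = 2"
    and avoid: "\<And>a b. a < 4 \<Longrightarrow> b < 4 \<Longrightarrow> a \<notin> A \<Longrightarrow> b \<notin> C \<Longrightarrow> (a, b) \<notin> P"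
  shows "P = {(a, b). a < 4 \<and> b < 4 \<and> (a \<in> A \<longleftrightarrow> b \<notin> C)}"
proof -
  have finC: "finite C" using C finite_subset by auto
  have cA': "card ({..<4} - A) = 2" using A by (simp add: card_Diff_subset finite_subset)
  have row_out: "grid_row P a = C" if "a < 4" "a \<notin> A" for a
  proof -
    have "grid_row P a \<subseteq> C" using avoid that by (auto simp: grid_row_def)
    then show ?thesis using card_subset_eq[OF finC] P that C by (simp add: two_regular_def)
  qed
  have col_in: "grid_col P b = {..<4} - A" if "b \<in> C" for b
  proof -
    have "a \<in> grid_col P b" if "a \<in> {..<4} - A" for a
      using row_out[of a] \<open>b \<in> C\<close> that by (auto simp: grid_col_def grid_row_def)
    moreover have "card (grid_col P b) = 2" using P that C by (auto simp: two_regular_def)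
    moreover have "finite (grid_col P b)" by (simp add: grid_col_def)
    ultimately show ?thesis using cA' by (metis card_subset_eq subsetI)
  qed
  have rows: "grid_row P a \<subseteq> (if a \<in> A then {..<4} - C else {..<4} - ({..<4} - C))"
    if "a < 4" for a
  proof (cases "a \<in> A")
    case True
    have "b \<notin> C" if "b \<in> grid_row P a" for b
    proof
      assume "b \<in> C"
      then have "a \<in> {..<4} - A" using col_in[of b] that \<open>a < 4\<close> by (auto simp: grid_col_def grid_row_def)
      then show False using True by simp
    qed
    then show ?thesis using True by (auto simp: grid_row_def)
  qed (use row_out[OF that] C in \<open>simp add: double_diff\<close>)
  have "A \<noteq> {}" "{..<4} - A \<noteq> {}" using A(2) cA' by (metis card.empty zero_neq_numeral)+
  then obtain a1 a0 where "a1 \<in> A" "a0 < 4" "a0 \<notin> A" by blast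
  then have "P = {(a, b). a < 4 \<and> b < 4 \<and> (a \<in> A \<longleftrightarrow> b \<in> {..<4} - C)}"
    using two_regular_by_rows(2)[OF P _ rows] A by blast
  then show ?thesis by auto
qed

lemma two_regular_meets_blocks:
  assumes P: "two_regular P" and A: "A \<subseteq> {..<4}" "card A = 2" and C: "C \<subseteq> {..<4}" "card C = 2"
    and ne: "P \<noteq> {(a, b). a < 4 \<and> b < 4 \<and> (a \<in> A \<longleftrightarrow> b \<notin> C)}"
  shows "\<exists>a\<in>A. \<exists>b\<in>C. (a, b) \<in> P" and "\<exists>a<4. \<exists>b<4. a \<notin> A \<and> b \<notin> C \<and> (a, b) \<in> P"
proof -
  show "\<exists>a\<in>A. \<exists>b\<in>C. (a, b) \<in> P"
  proof (rule ccontr)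
    assume "\<not> ?thesis"
    moreover have "card ({..<4} - A) = 2" "card ({..<4} - C) = 2"
      using A C by (simp_all add: card_Diff_subset finite_subset)
    ultimately have "P = {(a, b). a < 4 \<and> b < 4 \<and> (a \<in> {..<4} - A \<longleftrightarrow> b \<notin> {..<4} - C)}"
      by (intro two_regular_avoiding_block[OF P]) auto
    also have "\<dots> = {(a, b). a < 4 \<and> b < 4 \<and> (a \<in> A \<longleftrightarrow> b \<notin> C)}" by auto
    finally show False using ne by contradiction
  qed
  show "\<exists>a<4. \<exists>b<4. a \<notin> A \<and> b \<notin> C \<and> (a, b) \<in> P"
  proof (rule ccontr)
    assume "\<not> ?thesis"
    then have "P = {(a, b). a < 4 \<and> b < 4 \<and> (a \<in> A \<longleftrightarrow> b \<notin> C)}"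
      by (intro two_regular_avoiding_block[OF P A C]) auto
    with ne show False by contradiction
  qed
qed

section \<open>Planes of a double-MDS-code\<close>

definition plane :: "nat list set \<Rightarrow> nat \<Rightarrow> nat \<Rightarrow> nat list \<Rightarrow> (nat \<times> nat) set" where
  "plane S i j x = {(a, b). a < 4 \<and> b < 4 \<and> x[i := a, j := b] \<in> S}"

definition split_plane :: "nat list set \<Rightarrow> nat \<Rightarrow> nat \<Rightarrow> nat list \<Rightarrow> bool" where
  "split_plane S i j x \<longleftrightarrow> even_rectangles (plane S i j x)"

lemma plane_subset_grid: "plane S i j x \<subseteq> grid4"
  by (auto simp: plane_def grid4_def)

lemma plane_cong:
  assumes "length x = length y" "i < length x" "j < length x"
    and "\<And>k. k < length x \<Longrightarrow> k \<noteq> i \<Longrightarrow> k \<noteq> j \<Longrightarrow> x ! k = y ! k"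
  shows "plane S i j x = plane S i j y"
proof -
  have "x[i := a, j := b] = y[i := a, j := b]" for a b
    using assms by (intro nth_equalityI) (auto simp: nth_list_update)
  then show ?thesis by (simp add: plane_def)
qed

lemma plane_swap: "i \<noteq> j \<Longrightarrow> plane S j i x = {(b, a). (a, b) \<in> plane S i j x}"
  by (auto simp: plane_def list_update_swap)

lemma split_plane_swap:
  assumes "i \<noteq> j" "split_plane S i j x" shows "split_plane S j i x"
  using assms(2) unfolding split_plane_def plane_swap[OF assms(1)] by (rule even_rectangles_transpose)

locale MDS_pair =
  fixes n :: nat and S :: "nat list set" and i j :: nat
  assumes MDS: "double_MDS_code n S" and i: "i < n" and j: "j < n" and i_ne_j: "i \<noteq> j"
begin

lemma two_regular_plane:
  assumes x: "x \<in> words n" shows "two_regular (plane S i j x)"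
  unfolding two_regular_def
proof (intro conjI allI impI)
  fix a :: nat assume a: "a < 4"
  have "grid_row (plane S i j x) a = {b. b < 4 \<and> (x[i := a])[j := b] \<in> S}"
    using a by (auto simp: grid_row_def plane_def)
  then show "card (grid_row (plane S i j x) a) = 2"
    using line_count_MDS[OF MDS list_update_words[OF x a] j] by (simp add: line_count_def)
next
  fix b :: nat assume b: "b < 4"
  have "grid_col (plane S i j x) b = {a. a < 4 \<and> (x[j := b])[i := a] \<in> S}"
    using b i_ne_j by (auto simp: grid_col_def plane_def list_update_swap)
  then show "card (grid_col (plane S i j x) b) = 2"
    using line_count_MDS[OF MDS list_update_words[OF x b] i] by (simp add: line_count_def)
qed (rule plane_subset_grid)

lemma card_plane_line:
  assumes x: "x \<in> words n" and k: "k < n" "k \<noteq> i" "k \<noteq> j" and ab: "a < 4" "b < 4"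
  shows "card {c. c < 4 \<and> (a, b) \<in> plane S i j (x[k := c])} = 2"
proof -
  have "{c. c < 4 \<and> (a, b) \<in> plane S i j (x[k := c])} = {c. c < 4 \<and> (x[i := a, j := b])[k := c] \<in> S}"
    using ab k by (auto simp: plane_def list_update_swap)
  then show ?thesis
    using line_count_MDS[OF MDS list_update_words[OF list_update_words[OF x ab(1)] ab(2)] k(1)]
    by (simp add: line_count_def)
qed

lemma plane_line_complement:
  assumes x: "x \<in> words n" and k: "k < n" "k \<noteq> i" "k \<noteq> j"
    and c: "c1 < 4" "c2 < 4" "c < 4" "c1 \<noteq> c2" "c \<noteq> c1" "c \<noteq> c2"
    and R: "plane S i j (x[k := c1]) = R" "plane S i j (x[k := c2]) = R"
  shows "plane S i j (x[k := c]) = grid4 - R"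
proof (intro set_eqI)
  fix p :: "nat \<times> nat"
  obtain a b where p: "p = (a, b)" by (cases p)
  let ?N = "{c. c < 4 \<and> (a, b) \<in> plane S i j (x[k := c])}"
  show "p \<in> plane S i j (x[k := c]) \<longleftrightarrow> p \<in> grid4 - R"
  proof (cases "a < 4 \<and> b < 4")
    case True
    then have N: "card ?N = 2" using card_plane_line[OF x k] by blast
    show ?thesis
    proof (cases "(a, b) \<in> R")
      case inR: True
      have "c \<notin> ?N"
      proof
        assume "c \<in> ?N"
        then have "{c1, c2, c} \<subseteq> ?N" using R inR c by auto
        then have "card {c1, c2, c} \<le> 2" using card_mono[of ?N "{c1, c2, c}"] N by simp
        then show False using c by simp
      qed
      then show ?thesis using p inR c by simp
    next
      case False
      have "?N \<subseteq> {..<4} - {c1, c2}" using R False by auto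
      moreover have "card ({..<4} - {c1, c2}) = 2" using c by (simp add: card_Diff_subset)
      ultimately have "?N = {..<4} - {c1, c2}" using N by (simp add: card_subset_eq)
      then show ?thesis using p c False True by (auto simp: grid4_def)
    qed
  next
    case False
    then show ?thesis using p by (auto simp: grid4_def plane_def)
  qed
qed

text \<open>Every cell lies in exactly two of the four planes along the line, so the numbers of corners
  of a rectangle lying in these planes add up to 8.\<close>

lemma split_plane_on_line:
  assumes x: "x \<in> words n" and k: "k < n" "k \<noteq> i" "k \<noteq> j" and c0: "c0 < 4"
    and split: "\<And>c. c < 4 \<Longrightarrow> c \<noteq> c0 \<Longrightarrow> split_plane S i j (x[k := c])"
  shows "split_plane S i j (x[k := c0])"
  unfolding split_plane_def
proof (rule even_rectanglesI)
  fix a a' b b' :: nat assume r: "a < 4" "a' < 4" "b < 4" "b' < 4"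
  let ?P = "\<lambda>c. plane S i j (x[k := c])"
  define corners :: "nat \<Rightarrow> nat" where
    "corners c = of_bool ((a, b) \<in> ?P c) + of_bool ((a', b) \<in> ?P c) +
                 of_bool ((a, b') \<in> ?P c) + of_bool ((a', b') \<in> ?P c)" for c
  have parity: "even (corners c) \<longleftrightarrow> ((((a, b) \<in> ?P c) \<longleftrightarrow> ((a', b) \<in> ?P c)) \<longleftrightarrow>
                 (((a, b') \<in> ?P c) \<longleftrightarrow> ((a', b') \<in> ?P c)))" for c
    unfolding corners_def
    by (cases "(a, b) \<in> ?P c"; cases "(a', b) \<in> ?P c"; cases "(a, b') \<in> ?P c";
        cases "(a', b') \<in> ?P c") simp_all
  have cell: "(\<Sum>c<4. of_bool ((p, q) \<in> ?P c)) = (2::nat)" if "p < 4" "q < 4" for p q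
  proof -
    have "{..<4} \<inter> {c. (p, q) \<in> ?P c} = {c. c < 4 \<and> (p, q) \<in> ?P c}" by auto
    then show ?thesis using card_plane_line[OF x k that] by simp
  qed
  have "(\<Sum>c<4. corners c) = 8" using cell r by (simp add: corners_def sum.distrib)
  moreover have "(\<Sum>c<4. corners c) = corners c0 + (\<Sum>c\<in>{..<4} - {c0}. corners c)"
    using c0 by (simp add: sum.remove)
  moreover have "even (\<Sum>c\<in>{..<4} - {c0}. corners c)"
  proof (rule dvd_sum)
    fix c assume "c \<in> {..<4} - {c0}"
    then have "even_rectangles (?P c)" using split by (simp add: split_plane_def)
    then show "even (corners c)" unfolding parity by (rule even_rectanglesD[OF _ r])
  qed
  ultimately have "even (corners c0)" by (metis dvd_add_left_iff even_numeral)
  then show "(((a, b) \<in> ?P c0) \<longleftrightarrow> ((a', b) \<in> ?P c0)) \<longleftrightarrow> (((a, b') \<in> ?P c0) \<longleftrightarrow> ((a', b') \<in> ?P c0))"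
    using parity[of c0] by simp
qed

end

definition subcube :: "nat \<Rightarrow> nat list \<Rightarrow> nat set \<Rightarrow> nat \<Rightarrow> nat \<Rightarrow> nat list set" where
  "subcube n w B i j = {x \<in> words n. \<forall>k<n. k \<notin> B \<longrightarrow> k \<noteq> i \<longrightarrow> k \<noteq> j \<longrightarrow> x ! k = w ! k}"

lemma subcube_list_update:
  "z \<in> subcube n w B i j \<Longrightarrow> k \<in> B \<Longrightarrow> c < 4 \<Longrightarrow> z[k := c] \<in> subcube n w B i j"
  unfolding subcube_def by (auto simp: list_update_words) (metis nth_list_update_neq)

definition plane_closed :: "nat list set \<Rightarrow> nat \<Rightarrow> nat \<Rightarrow> nat list set \<Rightarrow> nat set \<Rightarrow> bool" where
  "plane_closed S i j D B \<longleftrightarrow>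
     (\<forall>x\<in>D. \<forall>k\<in>B. \<forall>c<4. plane S i j (x[k := c]) \<noteq> grid4 - plane S i j x \<longrightarrow> x[k := c] \<in> D)"

text \<open>The values of coordinate \<open>k\<close> that carry non-split planes form a set \<open>bad_values k\<close> of
  size 0 or 2. If all of them have size 2, the plane of any word of the subcube is the plane of a
  point of \<open>D\<close>, complemented once for every coordinate with a bad value.\<close>

locale split_slices = MDS_pair +
  fixes w :: "nat list" and B :: "nat set" and D :: "nat list set"
  assumes B: "B \<subseteq> {..<n} - {i, j}"
    and D: "D \<subseteq> subcube n w B i j" "D \<noteq> {}"
    and closed: "plane_closed S i j D B"
    and D_split: "\<And>x. x \<in> D \<Longrightarrow> split_plane S i j x"
    and slices_split: "\<And>x k y. x \<in> D \<Longrightarrow> k \<in> B \<Longrightarrow> y \<in> subcube n w B i j \<Longrightarrow> y ! k = x ! k \<Longrightarrow>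
                          split_plane S i j y"
begin

definition bad_values :: "nat \<Rightarrow> nat set" where
  "bad_values k = {c. c < 4 \<and> (\<exists>y\<in>subcube n w B i j. y ! k = c \<and> \<not> split_plane S i j y)}"

lemma D_words: "x \<in> D \<Longrightarrow> x \<in> words n"
  using D by (auto simp: subcube_def)

lemma B_coord: "k \<in> B \<Longrightarrow> k < n \<and> k \<noteq> i \<and> k \<noteq> j"
  using B by auto

lemma nth_D_notin_bad_values: "x \<in> D \<Longrightarrow> k \<in> B \<Longrightarrow> x ! k \<notin> bad_values k"
  using slices_split unfolding bad_values_def by blast

lemma plane_update_bad_value:
  assumes x: "x \<in> D" and k: "k \<in> B" and c: "c \<in> bad_values k"
  shows "plane S i j (x[k := c]) = grid4 - plane S i j x"
proof (rule ccontr)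
  assume "plane S i j (x[k := c]) \<noteq> grid4 - plane S i j x"
  then have "x[k := c] \<in> D" using closed x k c unfolding plane_closed_def bad_values_def by blast
  moreover have "x[k := c] ! k = c" using D_words[OF x] B_coord[OF k] by (simp add: length_words)
  ultimately show False using nth_D_notin_bad_values k c by metis
qed

lemma card_bad_values_le:
  assumes k: "k \<in> B" shows "card (bad_values k) \<le> 2"
proof -
  obtain x0 where x0: "x0 \<in> D" using D by auto
  obtain b where b: "b < 4" "(0, b) \<notin> plane S i j x0"
    using two_regular_row_gap[OF two_regular_plane[OF D_words[OF x0]]] by blast
  have "bad_values k \<subseteq> {c. c < 4 \<and> (0, b) \<in> plane S i j (x0[k := c])}"
  proof
    fix c assume c: "c \<in> bad_values k"
    have "(0, b) \<in> grid4 - plane S i j x0" using b by (simp add: grid4_def)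
    then show "c \<in> {c. c < 4 \<and> (0, b) \<in> plane S i j (x0[k := c])}"
      using plane_update_bad_value[OF x0 k c] c by (simp add: bad_values_def)
  qed
  moreover have "card {c. c < 4 \<and> (0, b) \<in> plane S i j (x0[k := c])} = 2"
    using card_plane_line[OF D_words[OF x0]] B_coord[OF k] b(1) by simp
  ultimately show ?thesis
    using card_mono[of "{c. c < 4 \<and> (0, b) \<in> plane S i j (x0[k := c])}" "bad_values k"] by simp
qed

lemma card_bad_values_ge:
  assumes k: "k \<in> B" and ne: "bad_values k \<noteq> {}" shows "2 \<le> card (bad_values k)"
proof -
  obtain y where y: "y \<in> subcube n w B i j" "\<not> split_plane S i j y"
    using ne by (auto simp: bad_values_def)
  have yw: "y \<in> words n" using y by (simp add: subcube_def)
  have yk: "y ! k < 4" "y[k := y ! k] = y"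
    using yw B_coord[OF k] by (simp_all add: nth_words_less)
  have "\<exists>c<4. c \<noteq> y ! k \<and> \<not> split_plane S i j (y[k := c])"
  proof (rule ccontr)
    assume "\<not> ?thesis"
    then have "split_plane S i j (y[k := y ! k])"
      using split_plane_on_line[OF yw _ _ _ yk(1)] B_coord[OF k] by blast
    then show False using y(2) yk(2) by simp
  qed
  then obtain c where c: "c < 4" "c \<noteq> y ! k" "\<not> split_plane S i j (y[k := c])" by blast
  have "y[k := c] \<in> subcube n w B i j" "y[k := c] ! k = c"
    using subcube_list_update[OF y(1) k c(1)] yw B_coord[OF k] by (simp_all add: length_words)
  then have "{y ! k, c} \<subseteq> bad_values k" using y yk c by (auto simp: bad_values_def)
  moreover have "finite (bad_values k)" by (simp add: bad_values_def)
  ultimately show ?thesis using card_mono c(2) by (metis card_2_iff)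
qed

lemma plane_update_good_value:
  assumes x: "x \<in> D" and k: "k \<in> B" and two: "card (bad_values k) = 2"
    and c: "c < 4" "c \<notin> bad_values k"
  shows "plane S i j (x[k := c]) = plane S i j x" and "x[k := c] \<in> D"
proof -
  obtain c1 c2 where c12: "bad_values k = {c1, c2}" "c1 \<noteq> c2" using two by (meson card_2_iff)
  then have c1: "c1 < 4" "c \<noteq> c1" and c2: "c2 < 4" "c \<noteq> c2" using c by (auto simp: bad_values_def)
  have "plane S i j (x[k := c1]) = grid4 - plane S i j x" "plane S i j (x[k := c2]) = grid4 - plane S i j x"
    using plane_update_bad_value[OF x k] c12(1) by auto
  then have "plane S i j (x[k := c]) = grid4 - (grid4 - plane S i j x)"
    using plane_line_complement[OF D_words[OF x] _ _ _ c1(1) c2(1) c(1) c12(2) c1(2) c2(2)] B_coord[OF k]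
    by blast
  then show eq: "plane S i j (x[k := c]) = plane S i j x"
    by (simp add: Diff_Diff_Int Int_absorb1 plane_subset_grid)
  have "plane S i j x \<noteq> grid4 - plane S i j x"
    using two_regular_ne_grid_Diff[OF two_regular_plane[OF D_words[OF x]]] .
  then show "x[k := c] \<in> D"
    using closed x k c(1) eq unfolding plane_closed_def by metis
qed

lemma plane_no_bad_values:
  assumes two: "\<And>k. k \<in> B \<Longrightarrow> card (bad_values k) = 2" and x0: "x0 \<in> D"
    and y: "y \<in> subcube n w B i j" and good: "\<And>k. k \<in> B \<Longrightarrow> y ! k \<notin> bad_values k"
  shows "plane S i j y = plane S i j x0"
proof -
  define y' where "y' = y[i := x0 ! i, j := x0 ! j]"
  have len: "length x0 = n" "length y = n" "length y' = n"
    using D_words[OF x0] y by (simp_all add: y'_def subcube_def length_words)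
  have x0_sub: "x0 \<in> subcube n w B i j" using D x0 by auto
  have diff: "k \<in> B" if "k < n" "x0 ! k \<noteq> y' ! k" for k
  proof (rule ccontr)
    assume "k \<notin> B"
    have "k \<noteq> i" "k \<noteq> j" using that len i_ne_j i j by (auto simp: y'_def nth_list_update)
    then have "y' ! k = y ! k" by (simp add: y'_def)
    then show False using \<open>k \<notin> B\<close> \<open>k \<noteq> i\<close> \<open>k \<noteq> j\<close> that x0_sub y by (auto simp: subcube_def)
  qed
  have "x0 \<in> D \<and> plane S i j x0 = plane S i j x0" using x0 by simp
  then have "y' \<in> D \<and> plane S i j y' = plane S i j x0"
  proof (rule list_update_induct_towards[rotated])
    fix z k assume z: "z \<in> D \<and> plane S i j z = plane S i j x0" and "k < length y'" "x0 ! k \<noteq> y' ! k"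
    then have k: "k \<in> B" using diff len by simp
    then have "y' ! k = y ! k" "y ! k < 4"
      using B_coord[OF k] y by (auto simp: y'_def subcube_def nth_words_less)
    then show "z[k := y' ! k] \<in> D \<and> plane S i j (z[k := y' ! k]) = plane S i j x0"
      using plane_update_good_value[OF _ k two[OF k]] good[OF k] z by auto
  qed (use len in simp)
  moreover have "plane S i j y' = plane S i j y"
    using len i j by (intro plane_cong) (auto simp: y'_def)
  ultimately show ?thesis by simp
qed

lemma plane_parity:
  assumes two: "\<And>k. k \<in> B \<Longrightarrow> card (bad_values k) = 2" and x0: "x0 \<in> D"
  shows "y \<in> subcube n w B i j \<Longrightarrow> plane S i j y =
    (if even (card {k\<in>B. y ! k \<in> bad_values k}) then plane S i j x0 else grid4 - plane S i j x0)"
proof (induction "card {k\<in>B. y ! k \<in> bad_values k}" arbitrary: y)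
  case 0
  have "finite B" using B finite_subset by auto
  with 0 have "y ! k \<notin> bad_values k" if "k \<in> B" for k using that by auto
  then show ?case using plane_no_bad_values[OF two x0 0(2)] 0(1) by simp
next
  case (Suc m)
  have fin: "finite B" using B finite_subset by auto
  obtain k where k: "k \<in> B" "y ! k \<in> bad_values k"
    using Suc.hyps(2) by (metis (no_types, lifting) card.empty empty_Collect_eq nat.distinct(1))
  have yw: "y \<in> words n" using Suc.prems by (simp add: subcube_def)
  have "card ({..<4} - bad_values k) = 2"
    using two[OF k(1)] by (simp add: card_Diff_subset bad_values_def subset_eq)
  then obtain c1 c2 where c12: "{..<4} - bad_values k = {c1, c2}" "c1 \<noteq> c2" by (meson card_2_iff)
  define R where "R = (if even m then plane S i j x0 else grid4 - plane S i j x0)"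
  have R: "plane S i j (y[k := c]) = R" if "c \<in> {c1, c2}" for c
  proof -
    have c: "c < 4" "c \<notin> bad_values k" using that c12 by auto
    have "{q\<in>B. y[k := c] ! q \<in> bad_values q} = {q\<in>B. y ! q \<in> bad_values q} - {k}"
      using yw B_coord[OF k(1)] c by (auto simp: nth_list_update length_words)
    then have "m = card {q\<in>B. y[k := c] ! q \<in> bad_values q}" using Suc.hyps(2) k fin by simp
    then show ?thesis using Suc.hyps(1) subcube_list_update[OF Suc.prems k(1) c(1)] by (simp add: R_def)
  qed
  have "y ! k < 4" "y ! k \<noteq> c1" "y ! k \<noteq> c2" using k(2) c12 by (auto simp: bad_values_def)
  then have "plane S i j (y[k := y ! k]) = grid4 - R"
    using plane_line_complement[OF yw _ _ _ _ _ _ c12(2) _ _ R[OF insertI1] R[OF insertI2[OF singletonI]]]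
      B_coord[OF k(1)] c12(1) by blast
  then show ?case
    by (simp add: R_def Suc.hyps(2)[symmetric] Diff_Diff_Int Int_absorb1 plane_subset_grid)
qed

lemma split_plane_subcube:
  assumes y: "y \<in> subcube n w B i j" shows "split_plane S i j y"
proof (cases "\<exists>k\<in>B. bad_values k = {}")
  case True
  then obtain k where "k \<in> B" "bad_values k = {}" by blast
  moreover have "y ! k < 4" if "k \<in> B" using that y B_coord by (auto simp: subcube_def nth_words_less)
  ultimately show ?thesis using y unfolding bad_values_def by blast
next
  case False
  then have two: "\<And>k. k \<in> B \<Longrightarrow> card (bad_values k) = 2"
    using card_bad_values_le card_bad_values_ge by (meson le_antisym)
  obtain x0 where x0: "x0 \<in> D" using D by auto
  have "plane S i j y = plane S i j x0 \<or> plane S i j y = grid4 - plane S i j x0"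
    using plane_parity[OF two x0 y] by metis
  then show ?thesis using D_split[OF x0] even_rectangles_grid_Diff by (auto simp: split_plane_def)
qed

end

text \<open>\<open>line_closed n S T\<close>: \<open>T\<close> is a union of connected components of \<open>G(S)\<close>.\<close>

definition line_closed :: "nat \<Rightarrow> nat list set \<Rightarrow> nat list set \<Rightarrow> bool" where
  "line_closed n S T \<longleftrightarrow> T \<subseteq> S \<and> (\<forall>u\<in>S. \<forall>p<n. \<forall>c<4. u[p := c] \<in> S \<longrightarrow> (u \<in> T \<longleftrightarrow> u[p := c] \<in> T))"

definition cuts :: "nat list set \<Rightarrow> nat list set \<Rightarrow> nat \<Rightarrow> nat \<Rightarrow> nat list \<Rightarrow> bool" where
  "cuts S T i j x \<longleftrightarrow> plane T i j x \<noteq> {} \<and> plane T i j x \<noteq> plane S i j x"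

lemma line_closedD:
  "line_closed n S T \<Longrightarrow> u \<in> S \<Longrightarrow> p < n \<Longrightarrow> c < 4 \<Longrightarrow> u[p := c] \<in> S \<Longrightarrow> u \<in> T \<longleftrightarrow> u[p := c] \<in> T"
  unfolding line_closed_def by blast

lemma plane_line_closed_update:
  assumes T: "line_closed n S T" and k: "k < n" "k \<noteq> i" "k \<noteq> j" and c: "c < 4"
    and ab: "(a, b) \<in> plane S i j x" "(a, b) \<in> plane S i j (x[k := c])"
  shows "(a, b) \<in> plane T i j (x[k := c]) \<longleftrightarrow> (a, b) \<in> plane T i j x"
proof -
  let ?u = "x[i := a, j := b]"
  have u: "x[k := c, i := a, j := b] = ?u[k := c]" using k by (simp add: list_update_swap)
  then have "?u \<in> S" "?u[k := c] \<in> S" using ab by (simp_all add: plane_def)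
  then have "?u \<in> T \<longleftrightarrow> ?u[k := c] \<in> T" using line_closedD[OF T _ k(1) c] by blast
  then show ?thesis using u ab by (simp add: plane_def)
qed

context MDS_pair
begin

lemma split_planes_of_closed:
  assumes "B \<subseteq> {..<n} - {i, j}" "D \<subseteq> subcube n w B i j" "D \<noteq> {}" "plane_closed S i j D B"
    and "\<And>x. x \<in> D \<Longrightarrow> split_plane S i j x" and "z \<in> subcube n w B i j"
  shows "split_plane S i j z"
  using assms
proof (induction "card B" arbitrary: B w D z rule: less_induct)
  case less
  have fin: "finite B" using less.prems(1) finite_subset by auto
  have slices: "split_plane S i j y"
    if x: "x \<in> D" and k: "k \<in> B" and y: "y \<in> subcube n w B i j" and yk: "y ! k = x ! k" for x k y
  proof (rule less.hyps[of "B - {k}" "D \<inter> subcube n x (B - {k}) i j" x y])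
    show "card (B - {k}) < card B" by (rule card_Diff1_less[OF fin k])
    show "B - {k} \<subseteq> {..<n} - {i, j}" using less.prems(1) by auto
    show "D \<inter> subcube n x (B - {k}) i j \<noteq> {}" using x less.prems(2) by (auto simp: subcube_def)
    show "plane_closed S i j (D \<inter> subcube n x (B - {k}) i j) (B - {k})"
      using less.prems(4) subcube_list_update[of _ n x "B - {k}" i j] unfolding plane_closed_def by blast
    show "y \<in> subcube n x (B - {k}) i j"
      using y x yk less.prems(2) by (auto simp: subcube_def)
  qed (use less.prems(5) in auto)
  interpret split_slices n S i j w B D
    by (intro split_slices.intro split_slices_axioms.intro MDS_pair_axioms)
      (use less.prems slices in auto)
  show ?case using split_plane_subcube less.prems(6) by blast
qed

lemma cut_plane_shape:
  assumes T: "line_closed n S T" and x: "x \<in> words n" and cut: "cuts S T i j x"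
  obtains A C where "A \<subseteq> {..<4}" "C \<subseteq> {..<4}" "card A = 2" "card C = 2"
    "plane S i j x = {(a, b). a < 4 \<and> b < 4 \<and> (a \<in> A \<longleftrightarrow> b \<in> C)}"
    "plane T i j x = {(a, b). a < 4 \<and> b < 4 \<and> a \<in> A \<and> b \<in> C}"
proof (rule two_regular_block_shape[OF two_regular_plane[OF x]])
  show "plane T i j x \<subseteq> plane S i j x" using T by (auto simp: line_closed_def plane_def)
next
  fix a b b' assume "(a, b) \<in> plane S i j x" "(a, b') \<in> plane S i j x"
  moreover have "x[i := a, j := b, j := b'] = x[i := a, j := b']" by simp
  ultimately show "(a, b) \<in> plane T i j x \<longleftrightarrow> (a, b') \<in> plane T i j x"
    using line_closedD[OF T _ j, of "x[i := a, j := b]" b'] by (simp add: plane_def)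
next
  fix a a' b assume "(a, b) \<in> plane S i j x" "(a', b) \<in> plane S i j x"
  moreover have "x[i := a, j := b, i := a'] = x[i := a', j := b]" using i_ne_j by (simp add: list_update_swap)
  ultimately show "(a, b) \<in> plane T i j x \<longleftrightarrow> (a', b) \<in> plane T i j x"
    using line_closedD[OF T _ i, of "x[i := a, j := b]" a'] by (simp add: plane_def)
next
  show "plane T i j x \<noteq> {}" "plane T i j x \<noteq> plane S i j x" using cut by (simp_all add: cuts_def)
qed (rule that)

lemma cut_plane_split:
  assumes "line_closed n S T" "x \<in> words n" "cuts S T i j x"
  shows "split_plane S i j x"
proof -
  obtain A C where "A \<subseteq> {..<4}" "C \<subseteq> {..<4}" "card A = 2" "card C = 2"
    and "plane S i j x = {(a, b). a < 4 \<and> b < 4 \<and> (a \<in> A \<longleftrightarrow> b \<in> C)}"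
    and "plane T i j x = {(a, b). a < 4 \<and> b < 4 \<and> a \<in> A \<and> b \<in> C}"
    by (rule cut_plane_shape[OF assms])
  then show ?thesis by (simp add: split_plane_def even_rectangles_product)
qed

lemma cut_planes_closed:
  assumes T: "line_closed n S T"
  shows "plane_closed S i j {x \<in> words n. cuts S T i j x} ({..<n} - {i, j})"
  unfolding plane_closed_def
proof (intro ballI allI impI)
  fix x k c
  assume x: "x \<in> {x \<in> words n. cuts S T i j x}" and k: "k \<in> {..<n} - {i, j}" and c: "c < 4"
    and ne: "plane S i j (x[k := c]) \<noteq> grid4 - plane S i j x"
  have xw: "x \<in> words n" and cut: "cuts S T i j x" and kn: "k < n" "k \<noteq> i" "k \<noteq> j"
    using x k by auto
  obtain A C where AC: "A \<subseteq> {..<4}" "C \<subseteq> {..<4}" "card A = 2" "card C = 2"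
    and Q: "plane S i j x = {(a, b). a < 4 \<and> b < 4 \<and> (a \<in> A \<longleftrightarrow> b \<in> C)}"
    and R: "plane T i j x = {(a, b). a < 4 \<and> b < 4 \<and> a \<in> A \<and> b \<in> C}"
    by (rule cut_plane_shape[OF T xw cut])
  let ?P = "plane S i j (x[k := c])"
  have reg: "two_regular ?P" using two_regular_plane[OF list_update_words[OF xw c]] .
  have compl: "grid4 - plane S i j x = {(a, b). a < 4 \<and> b < 4 \<and> (a \<in> A \<longleftrightarrow> b \<notin> C)}"
    unfolding Q by (auto simp: grid4_def)
  have "?P \<noteq> {(a, b). a < 4 \<and> b < 4 \<and> (a \<in> A \<longleftrightarrow> b \<notin> C)}" using ne compl by simp
  note meets = two_regular_meets_blocks[OF reg AC(1,3) AC(2,4) this]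
  obtain a b where in_block: "a \<in> A" "b \<in> C" "(a, b) \<in> ?P" using meets(1) by blast
  obtain a' b' where out_block: "a' < 4" "b' < 4" "a' \<notin> A" "b' \<notin> C" "(a', b') \<in> ?P"
    using meets(2) by blast
  have "a < 4" "b < 4" using in_block AC by auto
  then have "(a, b) \<in> plane S i j x" "(a, b) \<in> plane T i j x" using in_block Q R by auto
  then have "(a, b) \<in> plane T i j (x[k := c])"
    using plane_line_closed_update[OF T kn c _ in_block(3)] by blast
  moreover have "(a', b') \<in> plane S i j x" "(a', b') \<notin> plane T i j x" using out_block Q R by auto
  then have "(a', b') \<notin> plane T i j (x[k := c])"
    using plane_line_closed_update[OF T kn c _ out_block(5)] by blast
  ultimately have "cuts S T i j (x[k := c])" using out_block(5) unfolding cuts_def by blast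
  then show "x[k := c] \<in> {x \<in> words n. cuts S T i j x}" using list_update_words[OF xw c] by simp
qed

lemma no_cut_if_not_split:
  assumes T: "line_closed n S T" and x: "x \<in> words n"
    and z: "z \<in> words n" "\<not> split_plane S i j z"
  shows "\<not> cuts S T i j x"
proof
  assume cut: "cuts S T i j x"
  have all: "subcube n x ({..<n} - {i, j}) i j = words n" by (auto simp: subcube_def)
  have "split_plane S i j z"
    by (rule split_planes_of_closed[where D = "{x \<in> words n. cuts S T i j x}"])
      (use all x z cut cut_planes_closed[OF T] cut_plane_split[OF T] in auto)
  with z(2) show False by contradiction
qed

end

definition linked :: "nat list set \<Rightarrow> nat \<Rightarrow> nat \<Rightarrow> nat \<Rightarrow> bool" where
  "linked S n i j \<longleftrightarrow> i < n \<and> j < n \<and> i \<noteq> j \<and> (\<exists>x\<in>words n. \<not> split_plane S i j x)"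

lemma linked_sym:
  assumes "linked S n i j" shows "linked S n j i"
proof -
  obtain x where x: "x \<in> words n" "\<not> split_plane S i j x" using assms by (auto simp: linked_def)
  then have "\<not> split_plane S j i x" using split_plane_swap[of j i S x] assms by (auto simp: linked_def)
  then show ?thesis using assms x(1) by (auto simp: linked_def)
qed

lemma linked_rtranclp_sym: "(linked S n)\<^sup>*\<^sup>* i j \<Longrightarrow> (linked S n)\<^sup>*\<^sup>* j i"
  using symp_rtranclp[of "linked S n"] linked_sym by (metis sympD sympI)

lemma linked_rtranclp_less: "(linked S n)\<^sup>*\<^sup>* i j \<Longrightarrow> i < n \<Longrightarrow> j < n"
  by (induction rule: rtranclp_induct) (auto simp: linked_def)

lemma linked_no_cut:
  assumes "double_MDS_code n S" "line_closed n S T" "linked S n i j" "x \<in> words n"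
  shows "\<not> cuts S T i j x"
proof -
  interpret MDS_pair n S i j using assms(1,3) by unfold_locales (auto simp: linked_def)
  show ?thesis using no_cut_if_not_split assms(2-4) by (auto simp: linked_def)
qed

section \<open>Connectedness and primality\<close>

lemma adjacent_list_update: "p < length u \<Longrightarrow> u ! p \<noteq> c \<Longrightarrow> adjacent u (u[p := c])"
proof -
  assume "p < length u" "u ! p \<noteq> c"
  then have "{i. i < length u \<and> u ! i \<noteq> u[p := c] ! i} = {p}" by (auto simp: nth_list_update)
  then show ?thesis by (simp add: adjacent_def)
qed

lemma adjacent_sym: "adjacent x y \<Longrightarrow> adjacent y x"
proof -
  assume h: "adjacent x y"
  then have l: "length x = length y" by (simp add: adjacent_def)
  then have "{i. i < length y \<and> y ! i \<noteq> x ! i} = {i. i < length x \<and> x ! i \<noteq> y ! i}" by auto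
  then show ?thesis using h l by (simp add: adjacent_def)
qed

lemma adjacentE:
  assumes "adjacent x y"
  obtains p where "p < length x" "x[p := y ! p] = y" "x ! p \<noteq> y ! p"
proof -
  have l: "length x = length y" and "card {i. i < length x \<and> x ! i \<noteq> y ! i} = 1"
    using assms by (auto simp: adjacent_def)
  then obtain p where p: "{i. i < length x \<and> x ! i \<noteq> y ! i} = {p}" using card_1_singletonE by blast
  then have pl: "p < length x" "x ! p \<noteq> y ! p" by auto
  moreover have "x[p := y ! p] = y"
  proof (rule nth_equalityI)
    fix i assume "i < length (x[p := y ! p])"
    then have i: "i < length y" using l by simp
    show "x[p := y ! p] ! i = y ! i"
    proof (cases "i = p")
      case False
      then have "i \<notin> {i. i < length x \<and> x ! i \<noteq> y ! i}" using p by blast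
      then show ?thesis using False i l by simp
    qed (use pl in simp)
  qed (simp add: l)
  ultimately show thesis using that by blast
qed

lemma component_line_closed:
  assumes "S \<subseteq> words n" shows "line_closed n S {y \<in> S. (adj_in S)\<^sup>*\<^sup>* x y}"
  unfolding line_closed_def
proof (intro conjI ballI allI impI)
  fix u p c assume u: "u \<in> S" and p: "p < n" and c: "c < 4" and uc: "u[p := c] \<in> S"
  show "u \<in> {y \<in> S. (adj_in S)\<^sup>*\<^sup>* x y} \<longleftrightarrow> u[p := c] \<in> {y \<in> S. (adj_in S)\<^sup>*\<^sup>* x y}"
  proof (cases "u ! p = c")
    case True
    then have "u[p := c] = u" by (metis list_update_id)
    then show ?thesis by simp
  next
    case False
    have "p < length u" using u assms p by (auto simp: length_words)
    then have "adj_in S u (u[p := c])" "adj_in S (u[p := c]) u"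
      using u uc False adjacent_list_update adjacent_sym by (auto simp: adj_in_def)
    then show ?thesis using u uc by (auto intro: rtranclp.rtrancl_into_rtrancl)
  qed
qed blast

text \<open>Otherwise the \<open>(q, r)\<close>-plane through \<open>z\<close> would be cut by \<open>T\<close>.\<close>

lemma linked_line_meets:
  assumes M: "double_MDS_code n S" and T: "line_closed n S T" and qr: "linked S n q r"
    and z: "z \<in> words n" and c: "c < 4" "z[q := c] \<in> T"
  shows "\<exists>c'<4. z[r := c'] \<in> T"
proof (rule ccontr)
  assume nr: "\<not> ?thesis"
  have q: "q < n" "r < n" "q \<noteq> r" using qr by (auto simp: linked_def)
  obtain c' where c': "c' < 4" "z[r := c'] \<in> S" using MDS_line_in_out(1)[OF M z q(2)] by blast
  have zq: "z ! q < 4" and zr: "z ! r < 4" using z q by (auto simp: nth_words_less)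
  have "z[q := c] ! r = z ! r" using q(3) by simp
  then have "z[q := c, r := z ! r] = z[q := c]" by (metis list_update_id)
  then have "(c, z ! r) \<in> plane T q r z" using c zr by (simp add: plane_def)
  moreover have "(z ! q, c') \<in> plane S q r z - plane T q r z" using c' zq nr by (simp add: plane_def)
  ultimately have "cuts S T q r z" unfolding cuts_def by blast
  then show False using linked_no_cut[OF M T qr z] by contradiction
qed

text \<open>If all coordinates are linked, whether the \<open>q\<close>-line through a word meets a component \<open>T\<close>
  does not depend on \<open>q\<close>; hence it is invariant under all coordinate changes, so every line
  meets \<open>T\<close>, and \<open>T\<close> is all of \<open>S\<close>.\<close>

lemma connected_if_linked:
  assumes M: "double_MDS_code n S" and n: "0 < n"
    and linked: "\<And>r. r < n \<Longrightarrow> (linked S n)\<^sup>*\<^sup>* 0 r" and x: "x \<in> S" and y: "y \<in> S"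
  shows "(adj_in S)\<^sup>*\<^sup>* x y"
proof -
  have SW: "S \<subseteq> words n" using M by (rule MDS_subset_words)
  define T where "T = {y \<in> S. (adj_in S)\<^sup>*\<^sup>* x y}"
  have T: "line_closed n S T" unfolding T_def using component_line_closed[OF SW] .
  define meets where "meets q z \<longleftrightarrow> (\<exists>c<4. z[q := c] \<in> T)" for q z
  have meets_linked: "meets q z \<longleftrightarrow> meets r z" if "linked S n q r" "z \<in> words n" for q r z
    using linked_line_meets[OF M T that(1,2)] linked_line_meets[OF M T linked_sym[OF that(1)] that(2)]
    unfolding meets_def by blast
  have meets_0: "meets 0 z = meets q z" if q: "q < n" and z: "z \<in> words n" for q z
  proof -
    have "(linked S n)\<^sup>*\<^sup>* 0 q" using linked q by blast
    then show ?thesis by (induction rule: rtranclp_induct) (simp_all add: meets_linked[OF _ z])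
  qed
  have xw: "x \<in> words n" and yw: "y \<in> words n" using x y SW by auto
  have "meets 0 y = meets 0 x"
  proof (rule words_update_invariant[OF xw yw])
    fix z k assume z: "z \<in> words n" and k: "k < n"
    have "meets k (z[k := y ! k]) = meets k z" by (simp add: meets_def)
    moreover have "z[k := y ! k] \<in> words n" using list_update_words[OF z nth_words_less[OF yw k]] .
    ultimately show "meets 0 (z[k := y ! k]) = meets 0 z" using meets_0[OF k] z by simp
  qed
  moreover have "x[0 := x ! 0] \<in> T" "x ! 0 < 4" using x xw n by (simp_all add: T_def nth_words_less)
  then have "meets 0 x" unfolding meets_def by blast
  ultimately obtain c where c: "c < 4" "y[0 := c] \<in> T" by (auto simp: meets_def)
  then have "y \<in> T" using line_closedD[OF T y n c(1)] T unfolding line_closed_def by blast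
  then show ?thesis by (simp add: T_def)
qed

lemma double_code_adjacent_closed:
  assumes M: "double_MDS_code n S" and T: "double_code n T" "T \<subseteq> S"
    and u: "u \<in> T" and v: "v \<in> S" and adj: "adjacent u v"
  shows "v \<in> T"
proof -
  have uw: "u \<in> words n" and vw: "v \<in> words n" using u v T(2) MDS_subset_words[OF M] by auto
  obtain p where p: "p < length u" and v_eq: "u[p := v ! p] = v"
    using adjacentE[OF adj] by blast
  have pn: "p < n" using p uw by (simp add: length_words)
  let ?LT = "{a. a < 4 \<and> u[p := a] \<in> T}" and ?LS = "{a. a < 4 \<and> u[p := a] \<in> S}"
  have "u ! p \<in> ?LT" using u nth_words_less[OF uw pn] by simp
  then have "line_count T u p \<noteq> 0" by (auto simp: line_count_def)
  moreover have "line_count T u p = 0 \<or> line_count T u p = 2"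
    using T(1) uw pn unfolding double_code_iff by blast
  ultimately have "card ?LT = 2" unfolding line_count_def by linarith
  moreover have "card ?LS = 2" using line_count_MDS[OF M uw pn] by (simp add: line_count_def)
  moreover have "?LT \<subseteq> ?LS" using T(2) by auto
  ultimately have "?LT = ?LS" by (simp add: card_subset_eq)
  moreover have "v ! p \<in> ?LS" using v v_eq nth_words_less[OF vw pn] by simp
  ultimately have "u[p := v ! p] \<in> T" by blast
  then show ?thesis using v_eq by simp
qed

lemma prime_code_if_connected:
  assumes M: "double_MDS_code n S" and ne: "S \<noteq> {}"
    and conn: "\<And>x y. x \<in> S \<Longrightarrow> y \<in> S \<Longrightarrow> (adj_in S)\<^sup>*\<^sup>* x y"
  shows "prime_code n S"
proof -
  have dc: "double_code n S" using M by (simp add: double_MDS_code_iff double_code_iff)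
  have full: "T = S" if T: "double_code n T" "T \<subseteq> S" "T \<noteq> {}" for T
  proof -
    obtain t where t: "t \<in> T" using T(3) by blast
    have "y \<in> T" if "y \<in> S" for y
    proof -
      have "(adj_in S)\<^sup>*\<^sup>* t y" using conn t T(2) that by blast
      then show ?thesis
      proof (induction rule: rtranclp_induct)
        case (step a b)
        then show ?case using double_code_adjacent_closed[OF M T(1,2)] by (auto simp: adj_in_def)
      qed (rule t)
    qed
    then show ?thesis using T(2) by blast
  qed
  have "\<not> (\<exists>P. partition_on S P \<and> card P \<ge> 2 \<and> (\<forall>T\<in>P. double_code n T))"
  proof
    assume "\<exists>P. partition_on S P \<and> card P \<ge> 2 \<and> (\<forall>T\<in>P. double_code n T)"
    then obtain P where P: "partition_on S P" "card P \<ge> 2" "\<forall>T\<in>P. double_code n T" by blast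
    then obtain T1 T2 where "T1 \<in> P" "T2 \<in> P" "T1 \<noteq> T2"
      by (metis One_nat_def card.infinite card_le_Suc0_iff_eq not_less_eq_eq numeral_2_eq_2 zero_le)
    then show False using full P(1,3) by (metis partition_onD1 partition_onD3 Union_upper)
  qed
  then show ?thesis using dc M ne by (auto simp: prime_code_def complementable_def)
qed

section \<open>Blocks of coordinates with split cross planes\<close>

lemma card_Collect_less_Suc: "card {l. l < Suc m \<and> P l} = card {l. l < m \<and> P l} + of_bool (P m)"
proof -
  have "{l. l < Suc m \<and> P l} = (if P m then insert m {l. l < m \<and> P l} else {l. l < m \<and> P l})"
    by (auto simp: less_Suc_eq)
  then show ?thesis by simp
qed

lemma card_Collect_remove:
  "(l::nat) < k \<Longrightarrow> card {l'. l' < k \<and> P l'} = card {l'. l' < k \<and> l' \<noteq> l \<and> P l'} + of_bool (P l)"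
proof -
  assume "l < k"
  then have "{l'. l' < k \<and> P l'} =
      (if P l then insert l {l'. l' < k \<and> l' \<noteq> l \<and> P l'} else {l'. l' < k \<and> l' \<noteq> l \<and> P l'})"
    by auto
  moreover have "finite {l'. l' < k \<and> l' \<noteq> l \<and> P l'}" by (rule finite_subset[of _ "{..<k}"]) auto
  ultimately show ?thesis by simp
qed

lemma split_plane_rectangle:
  assumes sp: "split_plane S a b z" and ab: "a \<noteq> b" "a < length z" "b < length z"
    and z: "z ! a < 4" "z ! b < 4" and \<alpha>\<beta>: "\<alpha> < 4" "\<beta> < 4"
  shows "(z \<in> S \<longleftrightarrow> z[a := \<alpha>] \<in> S) \<longleftrightarrow> (z[b := \<beta>] \<in> S \<longleftrightarrow> z[a := \<alpha>, b := \<beta>] \<in> S)"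
proof -
  have "((z ! a, z ! b) \<in> plane S a b z \<longleftrightarrow> (\<alpha>, z ! b) \<in> plane S a b z) \<longleftrightarrow>
        ((z ! a, \<beta>) \<in> plane S a b z \<longleftrightarrow> (\<alpha>, \<beta>) \<in> plane S a b z)"
    using even_rectanglesD[OF sp[unfolded split_plane_def] z(1) \<alpha>\<beta>(1) z(2) \<alpha>\<beta>(2)] .
  moreover have "z[a := \<alpha>, b := z ! b] = z[a := \<alpha>]"
    using ab(1) by (metis list_update_id nth_list_update_neq)
  ultimately show ?thesis using z \<alpha>\<beta> by (simp add: plane_def)
qed

lemma split_planes_update_patch:
  assumes cross: "\<And>a b z. a \<in> A \<Longrightarrow> b \<in> B \<Longrightarrow> z \<in> words n \<Longrightarrow> split_plane S a b z"
    and AB: "A \<inter> B = {}" and q: "q \<in> words n" and z: "z \<in> words n"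
    and a: "a \<in> A" "a < n" and \<alpha>: "\<alpha> < 4"
  shows "(z \<in> S \<longleftrightarrow> z[a := \<alpha>] \<in> S) \<longleftrightarrow> (patch z B q \<in> S \<longleftrightarrow> (patch z B q)[a := \<alpha>] \<in> S)"
proof -
  let ?f = "\<lambda>u. u \<in> S \<longleftrightarrow> u[a := \<alpha>] \<in> S"
  have "?f (patch z B q) = ?f z"
  proof (rule words_update_invariant[OF z patch_words[OF z q]])
    fix u k assume u: "u \<in> words n" and k: "k < n" and diff: "z ! k \<noteq> patch z B q ! k"
    have kB: "k \<in> B"
    proof (rule ccontr)
      assume "k \<notin> B"
      then show False using diff z k by (simp add: nth_patch length_words)
    qed
    then have ak: "a \<noteq> k" using a AB by auto
    let ?c = "patch z B q ! k"
    have c: "?c < 4" using nth_words_less[OF patch_words[OF z q] k] .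
    have "?f u \<longleftrightarrow> (u[k := ?c] \<in> S \<longleftrightarrow> u[a := \<alpha>, k := ?c] \<in> S)"
      using split_plane_rectangle[OF cross[OF a(1) kB u] ak _ _ _ _ \<alpha> c] u a(2) k
      by (simp add: length_words nth_words_less)
    then show "?f (u[k := ?c]) = ?f u" using ak by (simp add: list_update_swap)
  qed
  then show ?thesis by simp
qed

lemma split_planes_patch_parity:
  assumes cross: "\<And>a b z. a \<in> A \<Longrightarrow> b \<in> B \<Longrightarrow> z \<in> words n \<Longrightarrow> split_plane S a b z"
    and AB: "A \<inter> B = {}" and A: "A \<subseteq> {..<n}"
    and p: "p \<in> words n" and q: "q \<in> words n" and z: "z \<in> words n"
  shows "(z \<in> S \<longleftrightarrow> patch z A p \<in> S) \<longleftrightarrow> (patch z B q \<in> S \<longleftrightarrow> patch (patch z B q) A p \<in> S)"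
proof -
  let ?g = "\<lambda>u. u \<in> S \<longleftrightarrow> patch u B q \<in> S"
  have "?g (patch z A p) = ?g z"
  proof (rule words_update_invariant[OF z patch_words[OF z p]])
    fix u k assume u: "u \<in> words n" and k: "k < n" and diff: "z ! k \<noteq> patch z A p ! k"
    have kA: "k \<in> A"
    proof (rule ccontr)
      assume "k \<notin> A"
      then show False using diff z k by (simp add: nth_patch length_words)
    qed
    let ?c = "patch z A p ! k"
    have c: "?c < 4" using nth_words_less[OF patch_words[OF z p] k] .
    have "patch (u[k := ?c]) B q = (patch u B q)[k := ?c]"
      using kA AB u k by (intro nth_equalityI) (auto simp: nth_patch nth_list_update length_words)
    then have "?g (u[k := ?c]) \<longleftrightarrow> (u[k := ?c] \<in> S \<longleftrightarrow> (patch u B q)[k := ?c] \<in> S)" by simp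
    then show "?g (u[k := ?c]) = ?g u"
      using split_planes_update_patch[OF cross AB q u kA k c] by blast
  qed
  moreover have "patch (patch z A p) B q = patch (patch z B q) A p"
    using AB by (intro nth_equalityI) (auto simp: nth_patch)
  ultimately show ?thesis by auto
qed

lemma split_planes_blocks_parity:
  fixes K :: "nat \<Rightarrow> nat set"
  assumes disj: "\<And>l l'. l < k \<Longrightarrow> l' < k \<Longrightarrow> l \<noteq> l' \<Longrightarrow> K l \<inter> K l' = {}"
    and sub: "\<And>l. l < k \<Longrightarrow> K l \<subseteq> {..<n}"
    and cross: "\<And>l l' a b z. l < k \<Longrightarrow> l' < k \<Longrightarrow> l \<noteq> l' \<Longrightarrow> a \<in> K l \<Longrightarrow> b \<in> K l' \<Longrightarrow>
                  z \<in> words n \<Longrightarrow> split_plane S a b z"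
    and y0: "y0 \<in> words n" "y0 \<notin> S" and x: "x \<in> words n"
  shows "m \<le> k \<Longrightarrow> patch y0 (\<Union>l<m. K l) x \<in> S \<longleftrightarrow> odd (card {l. l < m \<and> patch y0 (K l) x \<in> S})"
proof (induction m)
  case 0
  have "patch y0 {} x = y0" using x y0 by (intro patch_id) (auto simp: length_words)
  then show ?case using y0 by simp
next
  case (Suc m)
  let ?A = "\<Union>l<m. K l" and ?B = "K m"
  have "K l \<inter> K m = {}" if "l < m" for l using disj[of l m] that Suc.prems by simp
  then have AB: "?A \<inter> ?B = {}" by blast
  have "K l \<subseteq> {..<n}" if "l < m" for l using sub[of l] that Suc.prems by simp
  then have A: "?A \<subseteq> {..<n}" by blast
  have cr: "split_plane S a b z" if a: "a \<in> ?A" and b: "b \<in> ?B" and z: "z \<in> words n" for a b z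
  proof -
    obtain l where "l < m" "a \<in> K l" using a by blast
    then show ?thesis using cross[of l m a b z] b z Suc.prems by simp
  qed
  have "(y0 \<in> S \<longleftrightarrow> patch y0 ?A x \<in> S) \<longleftrightarrow> (patch y0 ?B x \<in> S \<longleftrightarrow> patch (patch y0 ?B x) ?A x \<in> S)"
    by (rule split_planes_patch_parity[OF cr AB A x x y0(1)])
  moreover have "patch (patch y0 ?B x) ?A x = patch y0 (\<Union>l<Suc m. K l) x"
    by (intro nth_equalityI) (auto simp: nth_patch lessThan_Suc)
  ultimately show ?case
    using Suc.IH Suc.prems y0(2) card_Collect_less_Suc[of m "\<lambda>l. patch y0 (K l) x \<in> S"] by auto
qed

section \<open>The decomposition into blocks of linked coordinates\<close>

text \<open>\<open>restr l\<close> is the code \<open>S\<^sub>l\<close> of the theorem.\<close>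

locale block_decomposition =
  fixes n :: nat and S :: "nat list set" and k :: nat and K :: "nat \<Rightarrow> nat set" and y0 :: "nat list"
  assumes MDS: "double_MDS_code n S"
    and y0: "y0 \<in> words n" "y0 \<notin> S"
    and disjoint: "\<And>l l'. l < k \<Longrightarrow> l' < k \<Longrightarrow> l \<noteq> l' \<Longrightarrow> K l \<inter> K l' = {}"
    and cover: "(\<Union>l<k. K l) = {..<n}"
    and nonempty: "\<And>l. l < k \<Longrightarrow> K l \<noteq> {}"
    and block_linked: "\<And>l p q. l < k \<Longrightarrow> p \<in> K l \<Longrightarrow> (linked S n)\<^sup>*\<^sup>* p q \<longleftrightarrow> q \<in> K l"
begin

definition restr :: "nat \<Rightarrow> nat list set" where
  "restr l = {z \<in> words (card (K l)). embed_at y0 (K l) z \<in> S}"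

definition restr_compl :: "nat \<Rightarrow> nat list set" where
  "restr_compl l = words (card (K l)) - restr l"

definition in_block :: "nat list \<Rightarrow> nat \<Rightarrow> bool" where
  "in_block x l \<longleftrightarrow> nths x (K l) \<in> restr l"

lemma S_words: "S \<subseteq> words n"
  using MDS by (rule MDS_subset_words)

lemma K_subset: "l < k \<Longrightarrow> K l \<subseteq> {..<n}"
  using cover by blast

lemma finite_K: "l < k \<Longrightarrow> finite (K l)"
  using K_subset finite_subset by blast

lemma card_K_pos: "l < k \<Longrightarrow> 0 < card (K l)"
  using nonempty finite_K by (simp add: card_gt_0_iff)

lemma block_exists: "p < n \<Longrightarrow> \<exists>l<k. p \<in> K l"
  using cover by auto

lemma block_unique: "l < k \<Longrightarrow> l' < k \<Longrightarrow> p \<in> K l \<Longrightarrow> p \<in> K l' \<Longrightarrow> l = l'"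
  using disjoint by blast

lemma length_y0: "length y0 = n"
  using y0 by (simp add: length_words)

lemma cross_split:
  assumes l: "l < k" "l' < k" "l \<noteq> l'" and ab: "a \<in> K l" "b \<in> K l'" and z: "z \<in> words n"
  shows "split_plane S a b z"
proof (rule ccontr)
  assume "\<not> split_plane S a b z"
  moreover have "a < n" "b < n" using K_subset l ab by blast+
  moreover have "a \<noteq> b" using disjoint[OF l] ab by blast
  ultimately have "linked S n a b" using z by (auto simp: linked_def)
  then have "b \<in> K l" using block_linked[OF l(1) ab(1)] by blast
  then show False using disjoint[OF l] ab by blast
qed

lemma in_block_iff_patch:
  assumes x: "x \<in> words n" and l: "l < k"
  shows "in_block x l \<longleftrightarrow> patch y0 (K l) x \<in> S"
proof -
  have "nths x (K l) \<in> words (card (K l))" using nths_words[OF x K_subset[OF l]] .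
  moreover have "patch y0 (K l) x = embed_at y0 (K l) (nths x (K l))"
    using x K_subset[OF l] length_y0 by (intro patch_eq_embed_at) (simp_all add: length_words)
  ultimately show ?thesis by (simp add: in_block_def restr_def)
qed

lemma in_S_iff_odd_blocks:
  assumes x: "x \<in> words n"
  shows "x \<in> S \<longleftrightarrow> odd (card {l. l < k \<and> in_block x l})"
proof -
  have "patch y0 (\<Union>l<k. K l) x \<in> S \<longleftrightarrow> odd (card {l. l < k \<and> patch y0 (K l) x \<in> S})"
    by (rule split_planes_blocks_parity[OF disjoint K_subset _ y0 x]) (auto intro: cross_split)
  moreover have "patch y0 (\<Union>l<k. K l) x = x"
    unfolding cover using x length_y0 by (intro patch_all) (simp_all add: length_words)
  moreover have "{l. l < k \<and> patch y0 (K l) x \<in> S} = {l. l < k \<and> in_block x l}"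
    using in_block_iff_patch[OF x] by blast
  ultimately show ?thesis by simp
qed

lemma in_block_parity:
  assumes x: "x \<in> words n" and l: "l < k"
  shows "x \<in> S \<longleftrightarrow> odd (card {l'. l' < k \<and> l' \<noteq> l \<and> in_block x l'} + of_bool (in_block x l))"
  using in_S_iff_odd_blocks[OF x] card_Collect_remove[OF l, of "in_block x"] by simp

lemma embed_at_words_block:
  "u \<in> words n \<Longrightarrow> l < k \<Longrightarrow> z \<in> words (card (K l)) \<Longrightarrow> embed_at u (K l) z \<in> words n"
  using embed_at_words K_subset by blast

lemma embed_at_block_list_update:
  assumes u: "u \<in> words n" and l: "l < k" and z: "z \<in> words (card (K l))" and r: "r < card (K l)"
  shows "embed_at u (K l) (z[r := a]) = (embed_at u (K l) z)[unrank (K l) r := a]"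
  using embed_at_list_update[of "K l" u r z a] K_subset[OF l] u r z by (simp add: length_words)

lemma restr_MDS:
  assumes l: "l < k" shows "double_MDS_code (card (K l)) (restr l)"
  unfolding double_MDS_code_iff
proof (intro conjI ballI allI impI)
  fix z r assume z: "z \<in> words (card (K l))" and r: "r < card (K l)"
  have "unrank (K l) r < n" using unrank_mem[OF finite_K[OF l] r] K_subset[OF l] by auto
  moreover have "{a. a < 4 \<and> z[r := a] \<in> restr l} =
      {a. a < 4 \<and> (embed_at y0 (K l) z)[unrank (K l) r := a] \<in> S}"
    using list_update_words[OF z] embed_at_block_list_update[OF y0(1) l z r] by (auto simp: restr_def)
  ultimately show "line_count (restr l) z r = 2"
    using line_count_MDS[OF MDS embed_at_words_block[OF y0(1) l z]] by (simp add: line_count_def)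
qed (auto simp: restr_def)

lemma restr_compl_MDS:
  assumes l: "l < k" shows "double_MDS_code (card (K l)) (restr_compl l)"
  unfolding double_MDS_code_iff
proof (intro conjI ballI allI impI)
  fix z r assume z: "z \<in> words (card (K l))" and r: "r < card (K l)"
  have "{a. a < 4 \<and> z[r := a] \<in> restr_compl l} = {a. a < 4 \<and> \<not> z[r := a] \<in> restr l}"
    using list_update_words[OF z] by (auto simp: restr_compl_def)
  moreover have "{a. a < 4 \<and> \<not> z[r := a] \<in> restr l} = {..<4} - {a. a < 4 \<and> z[r := a] \<in> restr l}"
    by auto
  then have "card {a. a < 4 \<and> \<not> z[r := a] \<in> restr l} = 4 - card {a. a < 4 \<and> z[r := a] \<in> restr l}"
    by (simp add: card_Diff_subset subset_eq)
  ultimately show "line_count (restr_compl l) z r = 2"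
    using line_count_MDS[OF restr_MDS[OF l] z r] by (simp add: line_count_def)
qed (auto simp: restr_compl_def)

lemma plane_restr:
  assumes l: "l < k" and z: "z \<in> words (card (K l))" and r: "r < card (K l)" "r' < card (K l)"
  shows "plane (restr l) r r' z = plane S (unrank (K l) r) (unrank (K l) r') (embed_at y0 (K l) z)"
proof -
  have "z[r := a, r' := b] \<in> restr l \<longleftrightarrow>
        (embed_at y0 (K l) z)[unrank (K l) r := a, unrank (K l) r' := b] \<in> S" if ab: "a < 4" "b < 4" for a b
  proof -
    have w1: "z[r := a] \<in> words (card (K l))" using list_update_words[OF z ab(1)] .
    have "embed_at y0 (K l) (z[r := a, r' := b]) =
          (embed_at y0 (K l) z)[unrank (K l) r := a, unrank (K l) r' := b]"
      using embed_at_block_list_update[OF y0(1) l w1 r(2)] embed_at_block_list_update[OF y0(1) l z r(1)]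
      by simp
    then show ?thesis using list_update_words[OF w1 ab(2)] by (simp add: restr_def)
  qed
  then show ?thesis by (auto simp: plane_def)
qed

lemma plane_restr_compl:
  assumes l: "l < k" and z: "z \<in> words (card (K l))"
  shows "plane (restr_compl l) r r' z = grid4 - plane (restr l) r r' z"
proof -
  have "z[r := a, r' := b] \<in> restr_compl l \<longleftrightarrow> z[r := a, r' := b] \<notin> restr l" if "a < 4" "b < 4" for a b
    using list_update_words[OF list_update_words[OF z that(1)] that(2)] by (simp add: restr_compl_def)
  then show ?thesis by (auto simp: plane_def grid4_def)
qed

lemma linked_restr_compl: "l < k \<Longrightarrow> linked (restr_compl l) (card (K l)) = linked (restr l) (card (K l))"
  by (intro ext) (simp add: linked_def split_plane_def plane_restr_compl even_rectangles_grid_Diff)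

lemma in_block_list_update_notin:
  assumes x: "x \<in> words n" and l: "l < k" and p: "p \<notin> K l"
  shows "in_block (x[p := a]) l \<longleftrightarrow> in_block x l"
  using nths_list_update_notin[OF p, of x a] K_subset[OF l] x by (simp add: in_block_def length_words)

text \<open>The plane through \<open>x\<close> is the plane through the patched word, complemented if the other
  blocks contribute odd parity.\<close>

lemma split_plane_patch:
  assumes l: "l < k" and p: "p \<in> K l" "p' \<in> K l" and x: "x \<in> words n"
  shows "split_plane S p p' x \<longleftrightarrow> split_plane S p p' (patch y0 (K l) x)"
proof -
  define c0 where "c0 = odd (card {l'. l' < k \<and> l' \<noteq> l \<and> in_block x l'})"
  have pn: "p < n" "p' < n" using p K_subset[OF l] by auto
  have "(a, b) \<in> plane S p p' x \<longleftrightarrow> (((a, b) \<in> plane S p p' (patch y0 (K l) x)) \<noteq> c0)"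
    if ab: "a < 4" "b < 4" for a b
  proof -
    let ?u = "x[p := a, p' := b]"
    have uw: "?u \<in> words n" using list_update_words[OF list_update_words[OF x ab(1)] ab(2)] .
    have "in_block ?u l' \<longleftrightarrow> in_block x l'" if "l' < k" "l' \<noteq> l" for l'
    proof -
      have "p \<notin> K l'" "p' \<notin> K l'" using block_unique[OF l that(1)] p that(2) by auto
      then show ?thesis
        using in_block_list_update_notin[OF list_update_words[OF x ab(1)] that(1)]
          in_block_list_update_notin[OF x that(1)] by simp
    qed
    then have "{l'. l' < k \<and> l' \<noteq> l \<and> in_block ?u l'} = {l'. l' < k \<and> l' \<noteq> l \<and> in_block x l'}" by blast
    moreover have "patch y0 (K l) ?u = (patch y0 (K l) x)[p := a, p' := b]"
      using p x pn length_y0 by (intro nth_equalityI) (auto simp: nth_patch nth_list_update length_words)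
    ultimately have "?u \<in> S \<longleftrightarrow> (((patch y0 (K l) x)[p := a, p' := b] \<in> S) \<noteq> c0)"
      using in_block_parity[OF uw l] in_block_iff_patch[OF uw l] unfolding c0_def by auto
    then show ?thesis using ab by (simp add: plane_def)
  qed
  then show ?thesis unfolding split_plane_def by (rule even_rectangles_xor)
qed

lemma linked_restr:
  assumes l: "l < k" and p: "p \<in> K l" "p' \<in> K l" and pp': "linked S n p p'"
  shows "linked (restr l) (card (K l)) (rank (K l) p) (rank (K l) p')"
proof -
  have fin: "finite (K l)" using finite_K[OF l] .
  obtain x where x: "x \<in> words n" "\<not> split_plane S p p' x" using pp' by (auto simp: linked_def)
  let ?z = "nths x (K l)"
  have zw: "?z \<in> words (card (K l))" using nths_words[OF x(1) K_subset[OF l]] .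
  have r: "rank (K l) p < card (K l)" "rank (K l) p' < card (K l)" using rank_less_card[OF fin] p by auto
  have "patch y0 (K l) x = embed_at y0 (K l) ?z"
    using x(1) K_subset[OF l] length_y0 by (intro patch_eq_embed_at) (simp_all add: length_words)
  then have "\<not> split_plane S p p' (embed_at y0 (K l) ?z)" using split_plane_patch[OF l p x(1)] x(2) by simp
  then have "\<not> split_plane (restr l) (rank (K l) p) (rank (K l) p') ?z"
    using plane_restr[OF l zw r] unrank_rank[OF fin] p by (simp add: split_plane_def)
  moreover have "rank (K l) p \<noteq> rank (K l) p'" using rank_inj[OF fin p] pp' by (auto simp: linked_def)
  ultimately show ?thesis using r zw by (auto simp: linked_def)
qed

lemma restr_linked_connected:
  assumes l: "l < k" and r: "r < card (K l)"
  shows "(linked (restr l) (card (K l)))\<^sup>*\<^sup>* 0 r"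
proof -
  have fin: "finite (K l)" using finite_K[OF l] .
  let ?p0 = "unrank (K l) 0"
  have p0: "?p0 \<in> K l" "rank (K l) ?p0 = 0" using unrank_mem[OF fin] rank_unrank[OF fin] card_K_pos[OF l] by auto
  have "q \<in> K l \<and> (linked (restr l) (card (K l)))\<^sup>*\<^sup>* 0 (rank (K l) q)" if "(linked S n)\<^sup>*\<^sup>* ?p0 q" for q
    using that
  proof (induction rule: rtranclp_induct)
    case (step q q')
    have "q' \<in> K l" using block_linked[OF l p0(1)] step.hyps by (meson rtranclp.rtrancl_into_rtrancl)
    then show ?case using linked_restr[OF l _ _ step.hyps(2)] step.IH by (meson rtranclp.rtrancl_into_rtrancl)
  qed (use p0 in simp)
  moreover have "(linked S n)\<^sup>*\<^sup>* ?p0 (unrank (K l) r)" using block_linked[OF l p0(1)] unrank_mem[OF fin r] by blast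
  ultimately show ?thesis using rank_unrank[OF fin r] by metis
qed

lemma restr_connected:
  "l < k \<Longrightarrow> x \<in> restr l \<Longrightarrow> y \<in> restr l \<Longrightarrow> (adj_in (restr l))\<^sup>*\<^sup>* x y"
  using connected_if_linked[OF restr_MDS card_K_pos restr_linked_connected] by blast

lemma restr_compl_connected:
  "l < k \<Longrightarrow> x \<in> restr_compl l \<Longrightarrow> y \<in> restr_compl l \<Longrightarrow> (adj_in (restr_compl l))\<^sup>*\<^sup>* x y"
  using connected_if_linked[OF restr_compl_MDS card_K_pos] restr_linked_connected linked_restr_compl by metis

lemma restr_nonempty: "l < k \<Longrightarrow> restr l \<noteq> {}"
  using MDS_nonempty[OF restr_MDS card_K_pos] by blast

lemma restr_compl_nonempty: "l < k \<Longrightarrow> restr_compl l \<noteq> {}"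
  using MDS_nonempty[OF restr_compl_MDS card_K_pos] by blast

lemma restr_prime: "l < k \<Longrightarrow> prime_code (card (K l)) (restr l)"
  using prime_code_if_connected[OF restr_MDS restr_nonempty restr_connected] by blast

lemma in_block_embed_at_other:
  assumes u: "u \<in> words n" and l: "l < k" "l' < k" "l' \<noteq> l" and w: "w \<in> words (card (K l))"
  shows "in_block (embed_at u (K l) w) l' \<longleftrightarrow> in_block u l'"
proof -
  have "embed_at u (K l) w ! p = u ! p" if "p \<in> K l'" for p
  proof -
    have "p \<notin> K l" "p < length u" using that disjoint l K_subset[OF l(2)] u by (auto simp: length_words)
    then show ?thesis by (simp add: nth_embed_at)
  qed
  then have "\<forall>p\<in>K l'. embed_at u (K l) w ! p = u ! p" by blast
  then have "nths (embed_at u (K l) w) (K l') = nths u (K l')"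
    using nths_eq_iff[of "embed_at u (K l) w" u "K l'"] K_subset[OF l(2)] u by (simp add: length_words)
  then show ?thesis by (simp add: in_block_def)
qed

lemma in_block_embed_at_same:
  assumes u: "u \<in> words n" and l: "l < k" and w: "w \<in> words (card (K l))"
  shows "in_block (embed_at u (K l) w) l \<longleftrightarrow> w \<in> restr l"
  using nths_embed_at[of "K l" u w] K_subset[OF l] u w by (simp add: in_block_def length_words)

lemma embed_at_in_S_iff:
  assumes u: "u \<in> S" and l: "l < k" and w: "w \<in> words (card (K l))"
  shows "embed_at u (K l) w \<in> S \<longleftrightarrow> (w \<in> restr l \<longleftrightarrow> in_block u l)"
proof -
  have uw: "u \<in> words n" using u S_words by auto
  have ew: "embed_at u (K l) w \<in> words n" using embed_at_words_block[OF uw l w] .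
  have "{l'. l' < k \<and> l' \<noteq> l \<and> in_block (embed_at u (K l) w) l'} = {l'. l' < k \<and> l' \<noteq> l \<and> in_block u l'}"
    using in_block_embed_at_other[OF uw l _ _ w] by blast
  then show ?thesis
    using in_block_parity[OF ew l] in_block_parity[OF uw l] u in_block_embed_at_same[OF uw l w]
    by (cases "w \<in> restr l"; cases "in_block u l") auto
qed

lemma adjacent_embed_at:
  assumes u: "u \<in> words n" and l: "l < k" and w: "w \<in> words (card (K l))" and adj: "adjacent w w'"
  shows "adjacent (embed_at u (K l) w) (embed_at u (K l) w')"
proof -
  obtain r where r: "r < length w" "w[r := w' ! r] = w'" "w ! r \<noteq> w' ! r"
    using adjacentE[OF adj] by blast
  have rK: "r < card (K l)" using r w by (simp add: length_words)
  let ?p = "unrank (K l) r"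
  have p: "?p \<in> K l" "rank (K l) ?p = r" using unrank_mem rank_unrank finite_K[OF l] rK by auto
  have pl: "?p < length (embed_at u (K l) w)" using p(1) K_subset[OF l] u by (auto simp: length_words)
  have "(embed_at u (K l) w)[?p := w' ! r] = embed_at u (K l) w'"
    using embed_at_block_list_update[OF u l w rK, of "w' ! r"] unfolding r(2) by simp
  moreover have "embed_at u (K l) w ! ?p = w ! r" using p pl by (simp add: nth_embed_at)
  ultimately show ?thesis using adjacent_list_update[OF pl] r(3) by metis
qed

text \<open>A path in \<open>restr l\<close> or in its complement lifts to a path in \<open>G(S)\<close>.\<close>

lemma connected_block_move:
  assumes l: "l < k" and u: "u \<in> S" and v: "v \<in> S"
    and agree: "\<And>p. p < n \<Longrightarrow> p \<notin> K l \<Longrightarrow> u ! p = v ! p" and same: "in_block u l \<longleftrightarrow> in_block v l"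
  shows "(adj_in S)\<^sup>*\<^sup>* u v"
proof -
  have uw: "u \<in> words n" and vw: "v \<in> words n" using u v S_words by auto
  define C where "C = (if in_block u l then restr l else restr_compl l)"
  have inC: "w \<in> C \<longleftrightarrow> (w \<in> restr l \<longleftrightarrow> in_block u l)" if "w \<in> words (card (K l))" for w
    using that by (auto simp: C_def restr_compl_def)
  have CW: "C \<subseteq> words (card (K l))" by (auto simp: C_def restr_def restr_compl_def)
  have conn: "(adj_in C)\<^sup>*\<^sup>* x y" if "x \<in> C" "y \<in> C" for x y
    using that restr_connected[OF l] restr_compl_connected[OF l] by (cases "in_block u l") (simp_all add: C_def)
  let ?zu = "nths u (K l)" and ?zv = "nths v (K l)"
  have zw: "?zu \<in> words (card (K l))" "?zv \<in> words (card (K l))"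
    using nths_words K_subset[OF l] uw vw by blast+
  have zC: "?zu \<in> C" "?zv \<in> C" using inC zw same by (auto simp: in_block_def)
  have eu: "embed_at u (K l) ?zu = u"
    using K_subset[OF l] uw by (intro embed_at_nths) (auto simp: length_words)
  have ev: "embed_at u (K l) ?zv = v"
    using K_subset[OF l] uw vw agree by (intro embed_at_nths) (auto simp: length_words)
  have "(adj_in S)\<^sup>*\<^sup>* u (embed_at u (K l) w)" if "(adj_in C)\<^sup>*\<^sup>* ?zu w" for w
    using that
  proof (induction rule: rtranclp_induct)
    case (step w w')
    have ww: "w \<in> C" "w' \<in> C" "adjacent w w'" using step.hyps(2) by (auto simp: adj_in_def)
    have wW: "w \<in> words (card (K l))" "w' \<in> words (card (K l))" using ww CW by auto
    have "embed_at u (K l) w \<in> S" "embed_at u (K l) w' \<in> S"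
      using embed_at_in_S_iff[OF u l] wW inC ww by auto
    then have "adj_in S (embed_at u (K l) w) (embed_at u (K l) w')"
      using adjacent_embed_at[OF uw l wW(1) ww(3)] by (simp add: adj_in_def)
    with step.IH show ?case by (rule rtranclp.rtrancl_into_rtrancl)
  qed (simp add: eu)
  then show ?thesis using conn zC ev by metis
qed

lemma adj_in_same_blocks:
  assumes "adj_in S x y" and l: "l < k"
  shows "in_block x l \<longleftrightarrow> in_block y l"
proof -
  have x: "x \<in> S" and y: "y \<in> S" and adj: "adjacent x y" using assms by (auto simp: adj_in_def)
  have xw: "x \<in> words n" and yw: "y \<in> words n" using x y S_words by auto
  obtain p where p: "p < length x" "x[p := y ! p] = y" using adjacentE[OF adj] by blast
  have pn: "p < n" using p xw by (simp add: length_words)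
  obtain l0 where l0: "l0 < k" "p \<in> K l0" using block_exists[OF pn] by blast
  have other: "in_block x l' \<longleftrightarrow> in_block y l'" if "l' < k" "l' \<noteq> l0" for l'
  proof -
    have "p \<notin> K l'" using block_unique[OF l0(1) that(1) l0(2)] that(2) by blast
    then show ?thesis using in_block_list_update_notin[OF xw that(1)] p(2) by metis
  qed
  then have "{l'. l' < k \<and> l' \<noteq> l0 \<and> in_block x l'} = {l'. l' < k \<and> l' \<noteq> l0 \<and> in_block y l'}" by blast
  then have "in_block x l0 \<longleftrightarrow> in_block y l0"
    using in_block_parity[OF xw l0(1)] in_block_parity[OF yw l0(1)] x y
    by (cases "in_block x l0"; cases "in_block y l0") auto
  then show ?thesis using other l by (cases "l = l0") auto
qed

lemma connected_same_blocks: "(adj_in S)\<^sup>*\<^sup>* x y \<Longrightarrow> l < k \<Longrightarrow> in_block x l \<longleftrightarrow> in_block y l"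
  by (induction rule: rtranclp_induct) (use adj_in_same_blocks in blast)+

lemma connected_if_same_blocks:
  assumes x: "x \<in> S" and y: "y \<in> S" and same: "\<And>l. l < k \<Longrightarrow> in_block x l \<longleftrightarrow> in_block y l"
  shows "(adj_in S)\<^sup>*\<^sup>* x y"
proof -
  have xw: "x \<in> words n" and yw: "y \<in> words n" using x y S_words by auto
  define z where "z m = patch x (\<Union>l<m. K l) y" for m
  have zw: "z m \<in> words n" for m using patch_words[OF xw yw] by (simp add: z_def)
  have nths_z: "nths (z m) (K l) = (if l < m then nths y (K l) else nths x (K l))"
    if m: "m \<le> k" and l: "l < k" for m l
  proof -
    have "p \<in> (\<Union>l'<m. K l') \<longleftrightarrow> l < m" if "p \<in> K l" for p
      using that block_unique[OF l] m by (auto intro: less_le_trans)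
    then show ?thesis using K_subset[OF l] xw yw
      by (auto simp: z_def nth_patch length_words nths_eq_iff)
  qed
  have zS: "z m \<in> S" if m: "m \<le> k" for m
  proof -
    have "in_block (z m) l \<longleftrightarrow> in_block x l" if "l < k" for l
      using nths_z[OF m that] same[OF that] by (simp add: in_block_def)
    then have "{l. l < k \<and> in_block (z m) l} = {l. l < k \<and> in_block x l}" by blast
    then show ?thesis using in_S_iff_odd_blocks[OF zw] in_S_iff_odd_blocks[OF xw] x by simp
  qed
  have "(adj_in S)\<^sup>*\<^sup>* x (z m)" if "m \<le> k" for m
    using that
  proof (induction m)
    case 0
    have "z 0 = x" unfolding z_def using xw yw by (intro patch_id) (auto simp: length_words)
    then show ?case by simp
  next
    case (Suc m)
    then have m: "m < k" by simp
    have "z m ! p = z (Suc m) ! p" if "p < n" "p \<notin> K m" for p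
      using that xw by (auto simp: z_def nth_patch lessThan_Suc length_words)
    moreover have "in_block (z m) m \<longleftrightarrow> in_block (z (Suc m)) m"
      using nths_z[OF _ m] Suc.prems same[OF m] by (simp add: in_block_def)
    ultimately have "(adj_in S)\<^sup>*\<^sup>* (z m) (z (Suc m))"
      using connected_block_move[OF m zS zS] Suc.prems by simp
    then show ?case using Suc by (meson Suc_leD rtranclp_trans)
  qed
  moreover have "z k = y" unfolding z_def cover using xw yw by (intro patch_all) (auto simp: length_words)
  ultimately show ?thesis by auto
qed

definition block_of :: "nat \<Rightarrow> nat" where
  "block_of p = (THE l. l < k \<and> p \<in> K l)"

lemma block_of_eq: "l < k \<Longrightarrow> p \<in> K l \<Longrightarrow> block_of p = l"
  unfolding block_of_def using block_unique by (intro the_equality) auto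

lemma exists_word_with_subwords:
  assumes w: "\<And>l. l < k \<Longrightarrow> w l \<in> words (card (K l))"
  shows "\<exists>x\<in>words n. \<forall>l<k. nths x (K l) = w l"
proof -
  define x where "x = map (\<lambda>p. w (block_of p) ! rank (K (block_of p)) p) [0..<n]"
  have xp: "x ! p = w l ! rank (K l) p" if "l < k" "p \<in> K l" for l p
  proof -
    have "p < n" using that K_subset by blast
    then show ?thesis by (simp add: x_def block_of_eq[OF that])
  qed
  have xw: "x \<in> words n"
  proof -
    have "x ! p < 4" if p: "p < n" for p
    proof -
      obtain l where l: "l < k" "p \<in> K l" using block_exists[OF p] by blast
      then show ?thesis using xp w rank_less_card[OF finite_K] nth_words_less by metis
    qed
    then show ?thesis by (simp add: words_iff x_def)
  qed
  have "nths x (K l) = w l" if l: "l < k" for l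
  proof (rule nth_equalityI)
    have wl: "length (w l) = card (K l)" using w[OF l] by (simp add: length_words)
    have len: "length (nths x (K l)) = card (K l)"
      using length_nths_subset[of "K l" x] K_subset[OF l] length_words[OF xw] by simp
    then show "length (nths x (K l)) = length (w l)" using wl by simp
    fix r assume "r < length (nths x (K l))"
    then have r: "r < card (K l)" using len by simp
    have "K l \<subseteq> {..<length x}" using K_subset[OF l] length_words[OF xw] by simp
    from nth_nths_unrank[OF this r] show "nths x (K l) ! r = w l ! r"
      using xp[OF l unrank_mem[OF finite_K[OF l] r]] rank_unrank[OF finite_K[OF l] r] by simp
  qed
  then show ?thesis using xw by blast
qed

lemma exists_word_with_blocks:
  assumes t: "odd (card {l. l < k \<and> t l})"
  shows "\<exists>x\<in>S. \<forall>l<k. in_block x l \<longleftrightarrow> t l"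
proof -
  have "\<exists>w. w \<in> words (card (K l)) \<and> (w \<in> restr l \<longleftrightarrow> t l)" if l: "l < k" for l
    using restr_nonempty[OF l] restr_compl_nonempty[OF l] by (cases "t l") (auto simp: restr_def restr_compl_def)
  then obtain w where w: "\<And>l. l < k \<Longrightarrow> w l \<in> words (card (K l)) \<and> (w l \<in> restr l \<longleftrightarrow> t l)" by metis
  then obtain x where x: "x \<in> words n" "\<And>l. l < k \<Longrightarrow> nths x (K l) = w l"
    using exists_word_with_subwords[of w] by blast
  then have blocks: "in_block x l \<longleftrightarrow> t l" if "l < k" for l using w[OF that] that by (simp add: in_block_def)
  then have "{l. l < k \<and> in_block x l} = {l. l < k \<and> t l}" by blast
  then have "x \<in> S" using in_S_iff_odd_blocks[OF x(1)] t by simp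
  then show ?thesis using blocks by blast
qed

text \<open>The bit of block \<open>0\<close> is left out: on \<open>S\<close> it is determined by the others through the parity.\<close>

definition signature :: "nat list \<Rightarrow> nat set" where
  "signature x = {l. 0 < l \<and> l < k \<and> in_block x l}"

lemma connected_iff_signature:
  assumes k: "0 < k" and x: "x \<in> S" and y: "y \<in> S"
  shows "(adj_in S)\<^sup>*\<^sup>* x y \<longleftrightarrow> signature x = signature y"
proof
  assume "(adj_in S)\<^sup>*\<^sup>* x y"
  then show "signature x = signature y" using connected_same_blocks by (auto simp: signature_def)
next
  assume sig: "signature x = signature y"
  have xw: "x \<in> words n" and yw: "y \<in> words n" using x y S_words by auto
  have other: "in_block x l \<longleftrightarrow> in_block y l" if "l < k" "l \<noteq> 0" for l
    using sig that unfolding signature_def by blast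
  then have "{l. l < k \<and> l \<noteq> 0 \<and> in_block x l} = {l. l < k \<and> l \<noteq> 0 \<and> in_block y l}" by blast
  then have "in_block x 0 \<longleftrightarrow> in_block y 0"
    using in_block_parity[OF xw k] in_block_parity[OF yw k] x y
    by (cases "in_block x 0"; cases "in_block y 0") auto
  then show "(adj_in S)\<^sup>*\<^sup>* x y" using connected_if_same_blocks[OF x y] other by metis
qed

lemma signature_image:
  assumes k: "0 < k" shows "signature ` S = Pow {1..<k}"
proof
  show "signature ` S \<subseteq> Pow {1..<k}" by (auto simp: signature_def)
next
  show "Pow {1..<k} \<subseteq> signature ` S"
  proof
    fix J assume J: "J \<in> Pow {1..<k}"
    define t where "t l = (if l = 0 then even (card J) else l \<in> J)" for l
    have "{l. l < k \<and> t l} = (if even (card J) then insert 0 J else J)"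
      using J k by (auto simp: t_def)
    moreover have "finite J" "0 \<notin> J" using J finite_subset by auto
    ultimately have "odd (card {l. l < k \<and> t l})" by auto
    then obtain x where x: "x \<in> S" "\<forall>l<k. in_block x l \<longleftrightarrow> t l"
      using exists_word_with_blocks by blast
    then have "signature x = J" using J by (auto simp: signature_def t_def)
    then show "J \<in> signature ` S" using x(1) by blast
  qed
qed

lemma card_components:
  assumes k: "0 < k" shows "card (components S) = 2 ^ (k - 1)"
proof -
  have "{y \<in> S. (adj_in S)\<^sup>*\<^sup>* x y} = {y \<in> S. signature y = signature x}" if "x \<in> S" for x
    using connected_iff_signature[OF k that] by auto
  then have "components S = (\<lambda>x. {y \<in> S. signature y = signature x}) ` S"
    unfolding components_def Setcompr_eq_image by (rule image_cong[OF refl])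
  also have "\<dots> = (\<lambda>J. {y \<in> S. signature y = J}) ` signature ` S" by (simp add: image_image)
  finally have "components S = (\<lambda>J. {y \<in> S. signature y = J}) ` signature ` S" .
  moreover have "inj_on (\<lambda>J. {y \<in> S. signature y = J}) (signature ` S)"
    by (intro inj_onI) blast
  ultimately have "card (components S) = card (Pow {1..<k})"
    using signature_image[OF k] by (simp add: card_image)
  then show ?thesis by (simp add: card_Pow)
qed

lemma two_le_blocks:
  assumes n: "0 < n" and np: "\<not> prime_code n S" shows "2 \<le> k"
proof (rule ccontr)
  assume "\<not> 2 \<le> k"
  moreover have "k \<noteq> 0" using cover n by auto
  ultimately have "k = 1" by simp
  then have K0: "K 0 = {..<n}" using cover by (simp add: lessThan_Suc)
  have "(linked S n)\<^sup>*\<^sup>* 0 r" if "r < n" for r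
    using block_linked[of 0 0 r] K0 that n \<open>k = 1\<close> by simp
  then have "(adj_in S)\<^sup>*\<^sup>* x y" if "x \<in> S" "y \<in> S" for x y
    using connected_if_linked[OF MDS n] that by blast
  then have "prime_code n S" using prime_code_if_connected[OF MDS MDS_nonempty[OF MDS n]] by blast
  with np show False by contradiction
qed

lemma card_block_less:
  assumes k: "2 \<le> k" and l: "l < k" shows "card (K l) < n"
proof -
  define l' :: nat where "l' = (if l = 0 then 1 else 0)"
  have l': "l' < k" "l' \<noteq> l" using k l by (auto simp: l'_def)
  have "card (K l) + card (K l') = card (K l \<union> K l')"
    using disjoint[OF l l'(1)] l'(2) finite_K l l'(1) by (simp add: card_Un_disjoint)
  also have "\<dots> \<le> card {..<n}" using K_subset l l'(1) by (intro card_mono) auto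
  finally show ?thesis using card_K_pos[OF l'(1)] by simp
qed

end

lemma block_decomposition_exists:
  assumes "double_MDS_code n S" "y0 \<in> words n" "y0 \<notin> S"
  shows "\<exists>k K. block_decomposition n S k K y0"
proof -
  define R where "R = {(p, q). p < n \<and> (linked S n)\<^sup>*\<^sup>* p q}"
  have R: "equiv {..<n} R"
    unfolding equiv_def refl_on_def sym_def trans_def R_def
    using linked_rtranclp_sym linked_rtranclp_less by (auto intro: rtranclp_trans)
  let ?Q = "{..<n} // R"
  have "finite ?Q" using R by (intro finite_quotient) (auto simp: equiv_def refl_on_def)
  then obtain K where K: "bij_betw K {0..<card ?Q} ?Q" using ex_bij_betw_nat_finite by blast
  have KQ: "K l \<in> ?Q" if "l < card ?Q" for l using K that by (auto simp: bij_betw_def)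
  have "block_decomposition n S (card ?Q) K y0"
  proof unfold_locales
    fix l l' assume "l < card ?Q" "l' < card ?Q" "l \<noteq> l'"
    moreover from this have "K l \<noteq> K l'" using K by (auto simp: bij_betw_def inj_on_def)
    ultimately show "K l \<inter> K l' = {}" using quotient_disj[OF R KQ KQ] by blast
  next
    have "K ` {..<card ?Q} = ?Q" using K by (simp add: bij_betw_def atLeast0LessThan)
    then show "(\<Union>l<card ?Q. K l) = {..<n}" using Union_quotient[OF R] by simp
  next
    fix l assume "l < card ?Q"
    then show "K l \<noteq> {}" using in_quotient_imp_non_empty[OF R KQ] by blast
  next
    fix l p q assume l: "l < card ?Q" and p: "p \<in> K l"
    then have "p < n" using in_quotient_imp_subset[OF R KQ[OF l]] by auto
    then show "(linked S n)\<^sup>*\<^sup>* p q \<longleftrightarrow> q \<in> K l"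
      using in_quotient_imp_closed[OF R KQ[OF l] p] in_quotient_imp_in_rel[OF R KQ[OF l]] p
      unfolding R_def by blast
  qed (fact assms)+
  then show ?thesis by blast
qed

theorem corollary4:
  fixes n :: nat and S :: "nat list set"
  assumes "n \<ge> 1"
    and "double_MDS_code n S"
    and "\<not> prime_code n S"
  shows "\<exists>m. card (components S) = 2 ^ m \<and> m \<ge> 1 \<and>
           (\<exists>(Ks :: nat \<Rightarrow> nat set) (Ss :: nat \<Rightarrow> nat list set).
              (\<forall>j < m + 1. Ks j \<noteq> {} \<and> card (Ks j) < n \<and>
                  prime_code (card (Ks j)) (Ss j) \<and> double_MDS_code (card (Ks j)) (Ss j)) \<and>
              (\<forall>j < m + 1. \<forall>j' < m + 1. j \<noteq> j' \<longrightarrow> Ks j \<inter> Ks j' = {}) \<and>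
              (\<Union>j < m + 1. Ks j) = {0..<n} \<and>
              (\<forall>x \<in> words n. x \<in> S \<longleftrightarrow>
                  odd (card {j. j < m + 1 \<and> nths x (Ks j) \<in> Ss j})))"
proof -
  have n: "0 < n" using assms(1) by simp
  obtain y0 where "y0 \<in> words n" "y0 \<notin> S" using exists_word_notin_MDS[OF assms(2) n] .
  then obtain k K where "block_decomposition n S k K y0"
    using block_decomposition_exists[OF assms(2)] by blast
  then interpret block_decomposition n S k K y0 .
  have k: "2 \<le> k" using two_le_blocks[OF n assms(3)] .
  show ?thesis
  proof (intro exI conjI)
    show "card (components S) = 2 ^ (k - 1)" using card_components k by simp
    show "\<forall>j<k - 1 + 1. K j \<noteq> {} \<and> card (K j) < n \<and>
        prime_code (card (K j)) (restr j) \<and> double_MDS_code (card (K j)) (restr j)"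
      using nonempty card_block_less[OF k] restr_prime restr_MDS k by simp
    show "\<forall>x\<in>words n. x \<in> S \<longleftrightarrow> odd (card {j. j < k - 1 + 1 \<and> nths x (K j) \<in> restr j})"
      using in_S_iff_odd_blocks k by (simp add: in_block_def)
  qed (use k disjoint cover in \<open>simp_all add: atLeast0LessThan\<close>)
qed

end
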